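(* Let $a>0$, $\psi_a(x)=\operatorname{sech}(ax)$, and let $f=\sum_{k\in\mathbb{Z}}c_k\psi_a(\cdot-k)$ with $c\in\ell^\infty(\mathbb{Z})$, $f\not\equiv0$. Let $N_f$ be the set of real zeros of $f$ with multiplicities $m_f$. Then $D^-(N_f,m_f)\le1$.
   Context: The multiplicity $m_f(x)$ of a real zero $x$ is the order of vanishing of $f$ at $x$. $D^-(N,m)=\liminf_{r\to\infty}\inf_{x\in\mathbb{R}}\frac{1}{2r}\sum_{\lambda\in N\cap[x-r,x+r]}m(\lambda)$. *)

theory Defs
  imports "HOL-Analysis.Analysis"
begin

definition sech_kernel :: "real \<Rightarrow> real \<Rightarrow> real" where
  "sech_kernel a x = 1 / cosh (a * x)"

definition zero_mult :: "(real \<Rightarrow> complex) \<Rightarrow> real \<Rightarrow> nat" where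
  "zero_mult f x = (THE n. \<exists>L. L \<noteq> 0 \<and>
      ((\<lambda>y. f y / (complex_of_real (y - x)) ^ n) \<longlongrightarrow> L) (at x))"

definition lower_density :: "real set \<Rightarrow> (real \<Rightarrow> nat) \<Rightarrow> ereal" where
  "lower_density N m = Liminf at_top (\<lambda>r::real.
      INF x::real. ereal ((\<Sum>z\<in>N \<inter> {x - r..x + r}. real (m z)) / (2 * r)))"

end

theory Submission
  imports Defs "HOL-Complex_Analysis.Complex_Analysis"
begin

(* Substituting t = exp (2ax) turns f into 2 exp (ax) F(t), where
   F(t) = sum_k c_k exp (ak) / (t + exp (2ak)) is holomorphic in Re t > 0 and the zeros of f
   become zeros of F of the same order. If the lower density were larger than 1, then for some
   block length D every block [jD, jD + D - 1] would carry D + 1 zeros. For large N take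
   n = N D, clear the poles of F with -n <= k < n by multiplying with P(t) = prod (t + exp (2ak)),
   divide by the polynomial Q vanishing at the 2N(D + 1) zeros in [-n, n) and multiply by t^N.
   The result is holomorphic on an annulus around the circles |t| = exp (2a(+-n - 1/2)); on
   both circles it is at most exp (-2aDN^2 + O(N)), while at the image of a point where f does
   not vanish it is at least exp (-aDN^2 - O(N)), against the maximum modulus principle. *)

section \<open>Summability and holomorphy of series\<close>

lemma summable_on_exp_neg_abs_int:
  fixes a :: real
  assumes "a > 0"
  shows "(\<lambda>k::int. exp (- a * \<bar>of_int k\<bar>)) summable_on UNIV"
proof -
  let ?g = "\<lambda>k::int. exp (- a * \<bar>of_int k\<bar>)"
  have "summable (\<lambda>n::nat. exp (- a) ^ n)"
    using assms by (intro summable_geometric) auto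
  then have geom: "(\<lambda>n::nat. exp (- a * real n)) summable_on UNIV"
    by (intro summable_nonneg_imp_summable_on) (auto simp: mult.commute simp flip: exp_of_nat_mult)
  then have "?g summable_on range int" "?g summable_on range (\<lambda>n. - int n)"
    by (simp_all add: summable_on_reindex inj_on_def o_def)
  then have "?g summable_on (range int \<union> range (\<lambda>n. - int n))"
    by (rule summable_on_union)
  moreover have "k \<in> range int \<union> range (\<lambda>n. - int n)" for k
    by (cases k rule: int_cases2) auto
  ultimately show ?thesis
    by (metis UNIV_eq_I)
qed

lemma has_sum_exp_neg_abs_int_shift:
  fixes a :: real and m :: int
  assumes "a > 0"
  shows "((\<lambda>k. exp (- a * \<bar>of_int k - of_int m\<bar>)) has_sum (\<Sum>\<^sub>\<infinity>k::int. exp (- a * \<bar>of_int k\<bar>))) UNIV"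
proof -
  have "bij_betw (\<lambda>k. k - m) UNIV (UNIV :: int set)"
    by (rule bij_betwI[of _ _ _ "\<lambda>k. k + m"]) auto
  then show ?thesis
    using has_sum_reindex_bij_betw[of "\<lambda>k. k - m" UNIV UNIV "\<lambda>k. exp (- a * \<bar>of_int k\<bar>)"]
      summable_on_exp_neg_abs_int[OF assms] by simp
qed

lemma summable_on_norm_le:
  fixes u :: "'i \<Rightarrow> 'a::banach"
  assumes "g summable_on A" "\<And>k. k \<in> A \<Longrightarrow> norm (u k) \<le> g k"
  shows "u summable_on A" "norm (infsum u A) \<le> infsum g A"
proof -
  show u: "u summable_on A"
    using Infinite_Sum.abs_summable_on_comparison_test'[OF assms] by (rule abs_summable_summable)
  show "norm (infsum u A) \<le> infsum g A"
    using norm_infsum_le[OF has_sum_infsum[OF u] has_sum_infsum[OF assms(1)]] assms(2) by blast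
qed

lemma holomorphic_on_infsum:
  fixes u :: "'i \<Rightarrow> complex \<Rightarrow> complex"
  assumes "open U"
    and bound: "\<And>w. w \<in> U \<Longrightarrow> \<exists>r>0. cball w r \<subseteq> U \<and>
               (\<exists>M. M summable_on X \<and> (\<forall>k\<in>X. \<forall>t\<in>cball w r. norm (u k t) \<le> M k))"
    and hol: "\<And>k. k \<in> X \<Longrightarrow> u k holomorphic_on U"
  shows "(\<lambda>t. \<Sum>\<^sub>\<infinity>k\<in>X. u k t) holomorphic_on U"
proof -
  have "(\<lambda>t. \<Sum>\<^sub>\<infinity>k\<in>X. u k t) field_differentiable (at w)" if "w \<in> U" for w
  proof -
    obtain r M where r: "r > 0" "cball w r \<subseteq> U" and "M summable_on X"
      and bd: "\<And>k t. k \<in> X \<Longrightarrow> t \<in> cball w r \<Longrightarrow> norm (u k t) \<le> M k"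
      using bound[OF \<open>w \<in> U\<close>] by blast
    have ul: "uniform_limit (cball w r) (\<lambda>Y t. \<Sum>k\<in>Y. u k t) (\<lambda>t. \<Sum>\<^sub>\<infinity>k\<in>X. u k t)
            (finite_subsets_at_top X)"
      by (rule Weierstrass_m_test_general[OF bd \<open>M summable_on X\<close>])
    have ev: "\<forall>\<^sub>F Y in finite_subsets_at_top X.
        continuous_on (cball w r) (\<lambda>t. \<Sum>k\<in>Y. u k t) \<and> (\<lambda>t. \<Sum>k\<in>Y. u k t) holomorphic_on ball w r"
    proof (rule eventually_finite_subsets_at_top_weakI)
      fix Y assume "finite Y" "Y \<subseteq> X"
      then have "(\<lambda>t. \<Sum>k\<in>Y. u k t) holomorphic_on cball w r"
        using hol r(2) by (intro holomorphic_on_sum) (auto intro: holomorphic_on_subset)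
      then show "continuous_on (cball w r) (\<lambda>t. \<Sum>k\<in>Y. u k t) \<and> (\<lambda>t. \<Sum>k\<in>Y. u k t) holomorphic_on ball w r"
        using holomorphic_on_imp_continuous_on holomorphic_on_subset[OF _ ball_subset_cball] by blast
    qed
    have "(\<lambda>t. \<Sum>\<^sub>\<infinity>k\<in>X. u k t) holomorphic_on ball w r"
      by (rule holomorphic_uniform_limit[OF ev ul]) auto
    then show ?thesis
      using r(1) holomorphic_on_imp_differentiable_at by auto
  qed
  then show ?thesis
    using \<open>open U\<close> holomorphic_on_open field_differentiable_def by blast
qed

section \<open>Orders of zeros and the maximum modulus on an annulus\<close>

lemma zero_mult_eqI:
  fixes \<phi> :: "real \<Rightarrow> complex"
  assumes "((\<lambda>y. \<phi> y / complex_of_real (y - \<xi>) ^ n) \<longlongrightarrow> L) (at \<xi>)" "L \<noteq> 0"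
  shows "zero_mult \<phi> \<xi> = n"
proof -
  have lower_order_absurd: False
    if lim1: "((\<lambda>y. \<phi> y / complex_of_real (y - \<xi>) ^ m1) \<longlongrightarrow> L1) (at \<xi>)" "L1 \<noteq> 0"
      and lim2: "((\<lambda>y. \<phi> y / complex_of_real (y - \<xi>) ^ m2) \<longlongrightarrow> L2) (at \<xi>)"
      and "m1 < m2"
    for m1 m2 L1 L2
  proof -
    have "((\<lambda>y. complex_of_real (y - \<xi>)) \<longlongrightarrow> 0) (at \<xi>)"
      by (intro tendsto_eq_intros) auto
    then have "((\<lambda>y. complex_of_real (y - \<xi>) ^ (m2 - m1)) \<longlongrightarrow> 0) (at \<xi>)"
      using \<open>m1 < m2\<close> by (intro tendsto_null_power) auto
    from tendsto_mult[OF this lim2]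
    have "((\<lambda>y. complex_of_real (y - \<xi>) ^ (m2 - m1) * (\<phi> y / complex_of_real (y - \<xi>) ^ m2))
            \<longlongrightarrow> 0) (at \<xi>)"
      by simp
    moreover have "\<forall>\<^sub>F y in at \<xi>. complex_of_real (y - \<xi>) ^ (m2 - m1) * (\<phi> y / complex_of_real (y - \<xi>) ^ m2)
                     = \<phi> y / complex_of_real (y - \<xi>) ^ m1"
      using \<open>m1 < m2\<close> by (auto simp: eventually_at_filter power_diff)
    ultimately have "((\<lambda>y. \<phi> y / complex_of_real (y - \<xi>) ^ m1) \<longlongrightarrow> 0) (at \<xi>)"
      using Lim_transform_eventually by fastforce
    with lim1 show False
      using tendsto_unique[OF trivial_limit_at] by blast
  qed
  show ?thesis
    unfolding zero_mult_def
  proof (rule the_equality)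
    fix m
    assume "\<exists>L. L \<noteq> 0 \<and> ((\<lambda>y. \<phi> y / complex_of_real (y - \<xi>) ^ m) \<longlongrightarrow> L) (at \<xi>)"
    then obtain L' where "L' \<noteq> 0" "((\<lambda>y. \<phi> y / complex_of_real (y - \<xi>) ^ m) \<longlongrightarrow> L') (at \<xi>)"
      by blast
    with assms lower_order_absurd show "m = n"
      by (cases m n rule: linorder_cases) blast+
  qed (use assms in blast)
qed

lemma zero_mult_holomorphic_comp:
  fixes F :: "complex \<Rightarrow> complex" and E :: "real \<Rightarrow> real" and u :: "real \<Rightarrow> complex"
  assumes F: "F holomorphic_on S" "open S" "connected S" "\<exists>w\<in>S. F w \<noteq> 0"
    and ES: "complex_of_real (E \<xi>) \<in> S"
    and E: "(E has_real_derivative E') (at \<xi>)" "E' \<noteq> 0"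
    and u: "isCont u \<xi>" "u \<xi> \<noteq> 0"
  shows "zero_mult (\<lambda>y. u y * F (complex_of_real (E y))) \<xi> = nat (zorder F (complex_of_real (E \<xi>)))"
proof -
  define \<tau> where "\<tau> = complex_of_real (E \<xi>)"
  define n where "n = nat (zorder F \<tau>)"
  define g where "g = zor_poly F \<tau>"
  obtain r where r: "r > 0" "g holomorphic_on cball \<tau> r"
    and fac: "\<And>w. w \<in> cball \<tau> r \<Longrightarrow> F w = g w * (w - \<tau>) ^ n \<and> g w \<noteq> 0"
    using zorder_exist_zero[OF F(1-3) ES[folded \<tau>_def] F(4)] unfolding n_def g_def by blast
  have E_lim: "((\<lambda>y. complex_of_real (E y)) \<longlongrightarrow> \<tau>) (at \<xi>)"
    using DERIV_isCont[OF E(1)] unfolding \<tau>_def isCont_def by (rule tendsto_of_real)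
  have "isCont g \<tau>"
    using r continuous_on_interior[OF holomorphic_on_imp_continuous_on[OF r(2)]] by simp
  then have g_lim: "((\<lambda>y. g (complex_of_real (E y))) \<longlongrightarrow> g \<tau>) (at \<xi>)"
    using E_lim isCont_tendsto_compose by blast
  have "((\<lambda>y. (E y - E \<xi>) / (y - \<xi>)) \<longlongrightarrow> E') (at \<xi>)"
    using E(1) by (simp add: has_field_derivative_iff)
  then have "((\<lambda>y. (complex_of_real (E y) - \<tau>) / complex_of_real (y - \<xi>)) \<longlongrightarrow> complex_of_real E') (at \<xi>)"
    unfolding \<tau>_def by (metis (no_types, lifting) Lim_cong_within of_real_diff of_real_divide tendsto_of_real)
  then have lim: "((\<lambda>y. u y * g (complex_of_real (E y)) * ((complex_of_real (E y) - \<tau>) / complex_of_real (y - \<xi>)) ^ n)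
      \<longlongrightarrow> u \<xi> * g \<tau> * complex_of_real E' ^ n) (at \<xi>)"
    using u(1) g_lim by (intro tendsto_intros) (auto simp: isCont_def)
  have "\<forall>\<^sub>F y in at \<xi>. complex_of_real (E y) \<in> cball \<tau> r \<and> y \<noteq> \<xi>"
    using tendstoD[OF E_lim r(1)] by (auto simp: eventually_at_filter dist_commute elim: eventually_mono)
  then have "\<forall>\<^sub>F y in at \<xi>. u y * g (complex_of_real (E y)) * ((complex_of_real (E y) - \<tau>) / complex_of_real (y - \<xi>)) ^ n
      = u y * F (complex_of_real (E y)) / complex_of_real (y - \<xi>) ^ n"
    by eventually_elim (simp add: fac power_divide)
  from Lim_transform_eventually[OF lim this] have
    "((\<lambda>y. u y * F (complex_of_real (E y)) / complex_of_real (y - \<xi>) ^ n) \<longlongrightarrow> u \<xi> * g \<tau> * complex_of_real E' ^ n) (at \<xi>)" .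
  moreover have "u \<xi> * g \<tau> * complex_of_real E' ^ n \<noteq> 0"
    using u(2) E(2) fac[of \<tau>] r(1) by simp
  ultimately show ?thesis
    unfolding n_def \<tau>_def by (rule zero_mult_eqI)
qed

lemma tendsto_divide_zero_factor:
  fixes G g q :: "complex \<Rightarrow> complex"
  assumes "isCont g \<tau>" "isCont q \<tau>" "q \<tau> \<noteq> 0"
    and "\<forall>\<^sub>F w in at \<tau>. G w = g w * (w - \<tau>) ^ \<nu>"
  shows "((\<lambda>w. G w / ((w - \<tau>) ^ \<nu> * q w)) \<longlongrightarrow> g \<tau> / q \<tau>) (at \<tau>)"
proof -
  have "((\<lambda>w. g w / q w) \<longlongrightarrow> g \<tau> / q \<tau>) (at \<tau>)"
    using assms(1-3) by (intro tendsto_divide) (auto simp: isCont_def)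
  moreover have "\<forall>\<^sub>F w in at \<tau>. g w / q w = G w / ((w - \<tau>) ^ \<nu> * q w)"
    using assms(4) by (auto simp: eventually_at_filter elim!: eventually_mono)
  ultimately show ?thesis
    by (rule Lim_transform_eventually)
qed

lemma holomorphic_divide_zeros:
  fixes G :: "complex \<Rightarrow> complex" and \<nu> :: "complex \<Rightarrow> nat"
  assumes "open \<Omega>" "G holomorphic_on \<Omega>" "finite K" "K \<subseteq> \<Omega>"
    and factor: "\<And>\<tau>. \<tau> \<in> K \<Longrightarrow>
      \<exists>r>0. \<exists>g. g holomorphic_on ball \<tau> r \<and> (\<forall>w\<in>ball \<tau> r. G w = g w * (w - \<tau>) ^ \<nu> \<tau>)"
  obtains h where "h holomorphic_on \<Omega>" "\<And>w. w \<in> \<Omega> - K \<Longrightarrow> G w = h w * (\<Prod>\<sigma>\<in>K. (w - \<sigma>) ^ \<nu> \<sigma>)"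
proof -
  obtain R g where Rg: "\<And>\<tau>. \<tau> \<in> K \<Longrightarrow> R \<tau> > 0 \<and> g \<tau> holomorphic_on ball \<tau> (R \<tau>) \<and>
      (\<forall>w\<in>ball \<tau> (R \<tau>). G w = g \<tau> w * (w - \<tau>) ^ \<nu> \<tau>)"
    using factor by metis
  define Q where "Q w = (\<Prod>\<sigma>\<in>K. (w - \<sigma>) ^ \<nu> \<sigma>)" for w
  define Q' where "Q' \<tau> w = (\<Prod>\<sigma>\<in>K - {\<tau>}. (w - \<sigma>) ^ \<nu> \<sigma>)" for \<tau> w
  define h where "h w = (if w \<in> K then g w w / Q' w w else G w / Q w)" for w
  have Q_nz: "w \<notin> K \<Longrightarrow> Q w \<noteq> 0" for w
    unfolding Q_def using \<open>finite K\<close> by auto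
  have "(h \<longlongrightarrow> h \<tau>) (at \<tau> within \<Omega>)" if "\<tau> \<in> K" for \<tau>
  proof -
    from Rg[OF that] have R: "R \<tau> > 0" and g: "g \<tau> holomorphic_on ball \<tau> (R \<tau>)"
      and G: "\<forall>w\<in>ball \<tau> (R \<tau>). G w = g \<tau> w * (w - \<tau>) ^ \<nu> \<tau>" by auto
    have "isCont (g \<tau>) \<tau>"
      using R continuous_on_interior[OF holomorphic_on_imp_continuous_on[OF g]] by simp
    moreover have "\<forall>\<^sub>F w in at \<tau>. G w = g \<tau> w * (w - \<tau>) ^ \<nu> \<tau>"
      using G R eventually_at_in_open'[of "ball \<tau> (R \<tau>)" \<tau>] by (auto elim: eventually_mono)
    ultimately have "((\<lambda>w. G w / ((w - \<tau>) ^ \<nu> \<tau> * Q' \<tau> w)) \<longlongrightarrow> g \<tau> \<tau> / Q' \<tau> \<tau>) (at \<tau>)"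
      using \<open>finite K\<close> unfolding Q'_def by (intro tendsto_divide_zero_factor) (auto intro!: continuous_intros)
    then have "((\<lambda>w. G w / ((w - \<tau>) ^ \<nu> \<tau> * Q' \<tau> w)) \<longlongrightarrow> h \<tau>) (at \<tau>)"
      using \<open>\<tau> \<in> K\<close> by (simp add: h_def)
    moreover have "\<forall>\<^sub>F w in at \<tau>. w \<notin> K"
      using islimpt_finite[OF \<open>finite K\<close>] islimpt_iff_eventually by blast
    then have "\<forall>\<^sub>F w in at \<tau>. G w / ((w - \<tau>) ^ \<nu> \<tau> * Q' \<tau> w) = h w"
      by eventually_elim (use \<open>finite K\<close> \<open>\<tau> \<in> K\<close> in \<open>simp add: h_def Q_def Q'_def prod.remove\<close>)
    ultimately show ?thesis
      using Lim_transform_eventually tendsto_within_subset by blast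
  qed
  moreover have "(\<lambda>w. G w / Q w) holomorphic_on \<Omega> - K"
    using Q_nz unfolding Q_def
    by (intro holomorphic_intros holomorphic_on_subset[OF \<open>G holomorphic_on \<Omega>\<close>]) auto
  then have "h holomorphic_on \<Omega> - K"
    by (rule holomorphic_transform) (simp add: h_def)
  ultimately have "h holomorphic_on \<Omega>"
    using no_isolated_singularity' \<open>open \<Omega>\<close> \<open>finite K\<close> by blast
  moreover have "G w = h w * Q w" if "w \<in> \<Omega> - K" for w
    using that Q_nz by (simp add: h_def)
  ultimately show ?thesis
    using that unfolding Q_def by blast
qed

lemma annulus_maximum_modulus:
  fixes H :: "complex \<Rightarrow> complex"
  assumes "H holomorphic_on U" "cball 0 R - ball 0 r \<subseteq> U" "0 < r"
    and "\<And>w. norm w = r \<Longrightarrow> norm (H w) \<le> B" "\<And>w. norm w = R \<Longrightarrow> norm (H w) \<le> B"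
    and "r \<le> norm z" "norm z \<le> R"
  shows "norm (H z) \<le> B"
proof (rule maximum_modulus_frontier[of H "cball 0 R - ball 0 r"])
  have closure: "closure (cball 0 R - ball 0 r) = cball 0 R - ball 0 r"
    by (blast intro!: closure_closed)
  have interior: "interior (cball 0 R - ball 0 r) = ball 0 R - cball (0::complex) r"
    using \<open>0 < r\<close> by (simp add: interior_diff)
  show "H holomorphic_on interior (cball 0 R - ball 0 r)"
    using assms(2) interior_subset by (blast intro: holomorphic_on_subset[OF assms(1)])
  show "continuous_on (closure (cball 0 R - ball 0 r)) H"
    unfolding closure by (rule holomorphic_on_imp_continuous_on, rule holomorphic_on_subset[OF assms(1,2)])
  show "norm (H w) \<le> B" if "w \<in> frontier (cball 0 R - ball 0 r)" for w
  proof -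
    from that have "w \<in> cball 0 R - ball 0 r" "w \<notin> ball 0 R - cball 0 r"
      unfolding frontier_def closure interior by simp_all
    then have "norm w = r \<or> norm w = R"
      by auto
    then show ?thesis
      using assms(4,5) by blast
  qed
qed (use assms(6,7) in auto)

lemma norm_add_ge_of_le:
  fixes z w :: "'a::real_normed_vector"
  assumes "norm z \<le> \<theta> * norm w"
  shows "(1 - \<theta>) * norm w \<le> norm (z + w)"
  using norm_diff_ineq[of w z] assms by (simp add: left_diff_distrib add.commute)

lemma norm_prod_le_exp:
  fixes z :: "'i \<Rightarrow> 'a::{real_normed_div_algebra, comm_ring_1}"
  assumes "finite A" "\<And>i. i \<in> A \<Longrightarrow> norm (z i) \<le> exp (g i)"
  shows "norm (\<Prod>i\<in>A. z i) \<le> exp (\<Sum>i\<in>A. g i)"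
  using assms by (simp add: exp_sum prod_mono flip: prod_norm)

lemma norm_prod_ge_exp:
  fixes z :: "'i \<Rightarrow> 'a::{real_normed_div_algebra, comm_ring_1}"
  assumes "finite A" "\<And>i. i \<in> A \<Longrightarrow> exp (g i) \<le> norm (z i)"
  shows "exp (\<Sum>i\<in>A. g i) \<le> norm (\<Prod>i\<in>A. z i)"
  using assms by (simp add: exp_sum prod_mono less_imp_le flip: prod_norm)

lemma norm_prod_power_le_exp:
  fixes z :: "'i \<Rightarrow> 'a::{real_normed_div_algebra, comm_ring_1}"
  assumes "finite A" "\<And>i. i \<in> A \<Longrightarrow> norm (z i) \<le> exp (g i)"
  shows "norm (\<Prod>i\<in>A. z i ^ m i) \<le> exp (\<Sum>i\<in>A. real (m i) * g i)"
  using assms by (intro norm_prod_le_exp) (auto simp: norm_power exp_of_nat_mult power_mono)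

lemma norm_prod_power_ge_exp:
  fixes z :: "'i \<Rightarrow> 'a::{real_normed_div_algebra, comm_ring_1}"
  assumes "finite A" "\<And>i. i \<in> A \<Longrightarrow> exp (g i) \<le> norm (z i)"
  shows "exp (\<Sum>i\<in>A. real (m i) * g i) \<le> norm (\<Prod>i\<in>A. z i ^ m i)"
  using assms by (intro norm_prod_ge_exp) (auto simp: norm_power exp_of_nat_mult power_mono)

lemma mult_divide_le_exp:
  fixes p u v q :: real
  assumes "0 \<le> p" "p \<le> exp x1" "0 \<le> u" "u \<le> exp x2" "0 \<le> v" "v \<le> exp x3" "exp x4 \<le> q"
  shows "p * u * v / q \<le> exp (x1 + x2 + x3 - x4)"
proof -
  have "p * u * v / q \<le> exp x1 * exp x2 * exp x3 / exp x4"
    using assms exp_gt_zero[of x4] by (intro frac_le mult_mono mult_nonneg_nonneg) auto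
  then show ?thesis
    by (simp add: exp_add exp_diff)
qed

lemma exp_le_mult_divide:
  fixes p u v q :: real
  assumes "exp x1 \<le> p" "exp x2 \<le> u" "exp x3 \<le> v" "0 < q" "q \<le> exp x4"
  shows "exp (x1 + x2 + x3 - x4) \<le> p * u * v / q"
proof -
  have "exp x1 * exp x2 * exp x3 / exp x4 \<le> p * u * v / q"
    using assms by (intro frac_le mult_mono mult_nonneg_nonneg) (auto intro: order.trans[OF less_imp_le[OF exp_gt_zero]])
  then show ?thesis
    by (simp add: exp_add exp_diff)
qed

lemma symmetric_int_range_Suc:
  "{- int (Suc n)..<int (Suc n)} = insert (- int n - 1) (insert (int n) {- int n..<int n})"
  by auto

lemma sum_symmetric_int_range: "(\<Sum>k\<in>{- int n..<int n}. real_of_int k) = - real n"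
proof (induction n)
  case (Suc n)
  then show ?case
    unfolding symmetric_int_range_Suc by simp
qed simp

lemma sum_symmetric_int_range_pos_part:
  "(\<Sum>k\<in>{- int n..<int n}. max 0 (real_of_int k)) = real n * (real n - 1) / 2"
proof (induction n)
  case (Suc n)
  then show ?case
    unfolding symmetric_int_range_Suc by (simp add: field_simps)
qed simp

lemma eventually_quadratic_pos:
  fixes \<alpha> \<beta> \<gamma> :: real
  assumes "\<alpha> > 0"
  shows "\<forall>\<^sub>F N in sequentially. \<alpha> * real N ^ 2 + \<beta> * real N + \<gamma> > 0"
proof -
  have "LIM N sequentially. \<beta> + \<alpha> * real N :> at_top"
    by (intro filterlim_tendsto_add_at_top[OF tendsto_const]
        filterlim_tendsto_pos_mult_at_top[OF tendsto_const assms filterlim_real_sequentially])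
  then have "\<forall>\<^sub>F N in sequentially. \<bar>\<gamma>\<bar> + 1 \<le> \<beta> + \<alpha> * real N \<and> 1 \<le> real N"
    using filterlim_real_sequentially by (auto simp: filterlim_at_top intro: eventually_conj)
  then show ?thesis
  proof eventually_elim
    case (elim N)
    then have "1 * (\<beta> + \<alpha> * real N) \<le> real N * (\<beta> + \<alpha> * real N)"
      by (intro mult_right_mono) auto
    with elim abs_ge_minus_self[of \<gamma>] show ?case
      by (simp add: power2_eq_square algebra_simps)
  qed
qed

lemma obtain_sub_multiplicity:
  fixes m :: "'a \<Rightarrow> nat"
  assumes "finite A" "K \<le> sum m A"
  obtains \<mu> where "\<And>x. \<mu> x \<le> m x" "\<And>x. x \<notin> A \<Longrightarrow> \<mu> x = 0" "sum \<mu> A = K"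
  using assms
proof (induction A arbitrary: K thesis rule: finite_induct)
  case empty
  then show ?case by auto
next
  case (insert x F)
  show ?case
  proof (cases "K \<le> sum m F")
    case True
    with insert.IH obtain \<mu> where \<mu>: "\<And>x. \<mu> x \<le> m x" "\<And>x. x \<notin> F \<Longrightarrow> \<mu> x = 0" "sum \<mu> F = K"
      by blast
    show ?thesis
      by (rule insert.prems(1)[of \<mu>]) (use \<mu> insert.hyps in auto)
  next
    case False
    define \<mu> where "\<mu> y = (if y \<in> F then m y else if y = x then K - sum m F else 0)" for y
    have "sum \<mu> F = sum m F"
      unfolding \<mu>_def by (rule sum.cong) auto
    with insert False show ?thesis
      by (intro insert.prems(1)[of \<mu>]) (auto simp: \<mu>_def)
  qed
qed

definition mass :: "real set \<Rightarrow> (real \<Rightarrow> nat) \<Rightarrow> real" where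
  "mass Z m = (\<Sum>x\<in>Z. real (m x))"

definition moment :: "real set \<Rightarrow> (real \<Rightarrow> nat) \<Rightarrow> real" where
  "moment Z m = (\<Sum>x\<in>Z. real (m x) * x)"

definition pos_moment :: "real set \<Rightarrow> (real \<Rightarrow> nat) \<Rightarrow> real" where
  "pos_moment Z m = (\<Sum>x\<in>Z. real (m x) * max 0 x)"

section \<open>The sech series as a sum of simple fractions\<close>

lemma sech_kernel_diff:
  fixes a x y :: real
  shows "sech_kernel a (x - y) = 2 * exp (a * x) * exp (a * y) / (exp (2 * a * x) + exp (2 * a * y))"
proof -
  have "2 * cosh (a * (x - y)) * (exp (a * x) * exp (a * y))
      = (exp (a * (x - y)) + exp (- (a * (x - y)))) * (exp (a * x) * exp (a * y))"
    by (simp add: cosh_def scaleR_conv_of_real)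
  also have "\<dots> = exp (2 * a * x) + exp (2 * a * y)"
    by (simp add: distrib_right algebra_simps flip: exp_add)
  finally show ?thesis
    using add_pos_pos[OF exp_gt_zero exp_gt_zero, of "2 * a * x" "2 * a * y"]
    unfolding sech_kernel_def by (simp add: field_simps)
qed

locale sech_series =
  fixes a :: real and c :: "int \<Rightarrow> complex" and B :: real and f :: "real \<Rightarrow> complex"
  assumes a_pos: "a > 0"
    and norm_c_le: "\<And>k. norm (c k) \<le> B"
    and f_eq: "\<And>x. f x = (\<Sum>\<^sub>\<infinity>k\<in>(UNIV::int set). c k * complex_of_real (sech_kernel a (x - of_int k)))"
begin

text \<open>The substitution \<open>t = e^(2ax)\<close> turns \<open>f x\<close> into \<open>2 e^(ax) * stieltjes t\<close>, a sum of simple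
  fractions whose poles \<open>-node k\<close> lie on the negative real axis.\<close>

definition node :: "int \<Rightarrow> real" where
  "node k = exp (2 * a * of_int k)"

definition weight :: "int \<Rightarrow> complex" where
  "weight k = c k * complex_of_real (exp (a * of_int k))"

definition stieltjes :: "complex \<Rightarrow> complex" where
  "stieltjes t = (\<Sum>\<^sub>\<infinity>k. weight k / (t + complex_of_real (node k)))"

lemma node_pos [simp]: "node k > 0"
  by (simp add: node_def)

lemma B_nonneg: "B \<ge> 0"
  using norm_c_le[of 0] norm_ge_zero[of "c 0"] by linarith

lemma norm_weight_le: "norm (weight k) \<le> B * exp (a * of_int k)"
  unfolding weight_def norm_mult using norm_c_le[of k] by (simp add: mult_right_mono)

lemma f_eq_stieltjes:
  "f x = 2 * complex_of_real (exp (a * x)) * stieltjes (complex_of_real (exp (2 * a * x)))"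
proof -
  have "c k * complex_of_real (sech_kernel a (x - of_int k)) = 2 * complex_of_real (exp (a * x)) *
        (weight k / (complex_of_real (exp (2 * a * x)) + complex_of_real (node k)))" for k
    by (simp add: sech_kernel_diff weight_def node_def mult_ac)
  then show ?thesis
    unfolding f_eq stieltjes_def infsum_cmult_right'[symmetric] by (simp only:)
qed

lemma norm_term_le_small_node:
  assumes "0 \<le> \<theta>" "\<theta> < 1" "node k \<le> \<theta> * norm t"
  shows "norm (weight k / (t + complex_of_real (node k))) \<le> B * exp (a * of_int k) / ((1 - \<theta>) * norm t)"
proof -
  have "t \<noteq> 0"
  proof
    assume "t = 0"
    with assms(3) have "node k \<le> 0"
      by simp
    with node_pos[of k] show False
      by linarith
  qed
  have "(1 - \<theta>) * norm t \<le> norm (t + complex_of_real (node k))"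
    using norm_add_ge_of_le[of "complex_of_real (node k)" \<theta> t] assms(3) by (simp add: abs_of_pos add.commute)
  then show ?thesis
    unfolding norm_divide using norm_weight_le[of k] B_nonneg assms(2) \<open>t \<noteq> 0\<close> by (intro frac_le) auto
qed

lemma norm_term_le_large_node:
  assumes "0 \<le> \<theta>" "\<theta> < 1" "norm t \<le> \<theta> * node k"
  shows "norm (weight k / (t + complex_of_real (node k))) \<le> B * exp (a * of_int k) / ((1 - \<theta>) * node k)"
proof -
  have "(1 - \<theta>) * node k \<le> norm (t + complex_of_real (node k))"
    using norm_add_ge_of_le[of t \<theta> "complex_of_real (node k)"] assms(3) by (simp add: abs_of_pos)
  then show ?thesis
    unfolding norm_divide using norm_weight_le[of k] B_nonneg assms(2) by (intro frac_le) auto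
qed

lemma exp_divide_node: "exp (a * of_int k) / node k = exp (- a * of_int k)"
  unfolding node_def by (subst exp_diff[symmetric]) (simp add: algebra_simps)

text \<open>The boundary circles of \<open>annulus n\<close> stay a factor \<open>e^(a/2)\<close> away from the poles \<open>-node k\<close>
  with \<open>k \<notin> {-n..<n}\<close>, and the annulus contains the circles \<open>|t| = e^(2a(n - 1/2))\<close> and
  \<open>|t| = e^(2a(-n - 1/2))\<close> used for the maximum modulus argument.\<close>

definition annulus :: "nat \<Rightarrow> complex set" where
  "annulus n = ball 0 (exp (2 * a * (real n - 1/4))) - cball 0 (exp (2 * a * (- real n - 3/4)))"

definition node_poly :: "nat \<Rightarrow> complex \<Rightarrow> complex" where
  "node_poly n t = (\<Prod>k\<in>{- int n..<int n}. t + complex_of_real (node k))"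

definition stieltjes_tail :: "nat \<Rightarrow> complex \<Rightarrow> complex" where
  "stieltjes_tail n t = (\<Sum>\<^sub>\<infinity>k\<in>UNIV - {- int n..<int n}. weight k / (t + complex_of_real (node k)))"

text \<open>\<open>cleared n\<close> is \<open>stieltjes * node_poly n\<close> with the poles \<open>-node k\<close>, \<open>-n \<le> k < n\<close>, cancelled
  term by term; the remaining poles lie outside \<open>annulus n\<close>.\<close>

definition cleared :: "nat \<Rightarrow> complex \<Rightarrow> complex" where
  "cleared n t = (\<Sum>k\<in>{- int n..<int n}. weight k * (\<Prod>j\<in>{- int n..<int n} - {k}. t + complex_of_real (node j)))
     + node_poly n t * stieltjes_tail n t"

lemma mem_annulus:
  "t \<in> annulus n \<longleftrightarrow> exp (2 * a * (- real n - 3/4)) < norm t \<and> norm t < exp (2 * a * (real n - 1/4))"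
  by (auto simp: annulus_def)

lemma open_annulus: "open (annulus n)"
  unfolding annulus_def by (intro open_Diff) auto

lemma annulus_exhaust:
  assumes "t \<noteq> 0"
  obtains n where "t \<in> annulus n"
proof -
  obtain n :: nat where "\<bar>ln (norm t)\<bar> / (2 * a) + 1 \<le> real n"
    using real_arch_simple by blast
  then have "\<bar>ln (norm t)\<bar> \<le> 2 * a * real n - 2 * a"
    using a_pos by (simp add: field_simps)
  then have "2 * a * (- real n - 3/4) < ln (norm t)" "ln (norm t) < 2 * a * (real n - 1/4)"
    using a_pos by (auto simp: algebra_simps abs_le_iff)
  then have "exp (2 * a * (- real n - 3/4)) < norm t" "norm t < exp (2 * a * (real n - 1/4))"
    using assms by (metis exp_less_cancel_iff exp_ln zero_less_norm_iff)+
  with that show ?thesis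
    unfolding mem_annulus by blast
qed

lemma annulus_norm_le_node:
  assumes "t \<in> annulus n" "int n \<le> k"
  shows "norm t \<le> exp (- a / 2) * node k"
proof -
  have "norm t < exp (2 * a * (real n - 1/4))"
    using assms(1) by (simp add: mem_annulus)
  also have "\<dots> = exp (- a / 2) * exp (2 * a * real n)"
    by (simp add: algebra_simps flip: exp_add)
  also have "\<dots> \<le> exp (- a / 2) * node k"
    using assms(2) a_pos by (simp add: node_def)
  finally show ?thesis
    by simp
qed

lemma annulus_node_le_norm:
  assumes "t \<in> annulus n" "k < - int n"
  shows "node k \<le> exp (- a / 2) * norm t"
proof -
  have "node k \<le> exp (2 * a * (- real n - 1))"
    using assms(2) a_pos by (simp add: node_def)
  also have "\<dots> = exp (- a / 2) * exp (2 * a * (- real n - 3/4))"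
    by (simp add: algebra_simps flip: exp_add)
  also have "\<dots> \<le> exp (- a / 2) * norm t"
    using assms(1) by (simp add: mem_annulus)
  finally show ?thesis .
qed

lemma annulus_no_pole:
  assumes "t \<in> annulus n" "k \<notin> {- int n..<int n}"
  shows "t + complex_of_real (node k) \<noteq> 0"
proof
  assume "t + complex_of_real (node k) = 0"
  then have "norm t = node k"
    by (metis add_eq_0_iff norm_minus_cancel norm_of_real abs_of_pos node_pos)
  then have "node k \<le> exp (- a / 2) * node k"
    using annulus_norm_le_node[OF assms(1)] annulus_node_le_norm[OF assms(1)] assms(2)
    by (cases "int n \<le> k") auto
  moreover have "exp (- a / 2) < 1"
    using a_pos by simp
  ultimately show False
    using node_pos[of k] by (simp add: mult_le_cancel_right1)
qed

lemma norm_tail_term_le: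
  assumes "t \<in> annulus n" "k \<notin> {- int n..<int n}"
  shows "norm (weight k / (t + complex_of_real (node k)))
           \<le> B / (1 - exp (- a / 2)) * exp (2 * a * (real n + 3/4)) * exp (- a * \<bar>of_int k\<bar>)"
proof -
  define \<theta> where "\<theta> = exp (- a / 2)"
  have \<theta>: "0 \<le> \<theta>" "\<theta> < 1"
    using a_pos by (auto simp: \<theta>_def)
  show ?thesis
  proof (cases "k \<ge> int n")
    case True
    have "norm (weight k / (t + complex_of_real (node k))) \<le> B * exp (a * of_int k) / ((1 - \<theta>) * node k)"
      using norm_term_le_large_node[OF \<theta> annulus_norm_le_node[OF assms(1) True, folded \<theta>_def]] .
    also have "\<dots> = B / (1 - \<theta>) * (exp (a * of_int k) / node k)"
      using \<theta> by (simp add: field_simps)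
    also have "\<dots> = B / (1 - \<theta>) * exp (- a * \<bar>of_int k\<bar>)"
      using True by (simp add: exp_divide_node)
    also have "\<dots> \<le> B / (1 - \<theta>) * exp (2 * a * (real n + 3/4)) * exp (- a * \<bar>of_int k\<bar>)"
      using mult_left_mono[of 1 "exp (2 * a * (real n + 3/4))" "B / (1 - \<theta>)"] \<theta> B_nonneg a_pos
      by (intro mult_right_mono) auto
    finally show ?thesis
      by (simp add: \<theta>_def)
  next
    case False
    with assms(2) have "k < - int n"
      by auto
    have "norm (weight k / (t + complex_of_real (node k))) \<le> B * exp (a * of_int k) / ((1 - \<theta>) * norm t)"
      using norm_term_le_small_node[OF \<theta> annulus_node_le_norm[OF assms(1) \<open>k < - int n\<close>, folded \<theta>_def]] .
    also have "\<dots> \<le> B * exp (a * of_int k) / ((1 - \<theta>) * exp (2 * a * (- real n - 3/4)))"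
      using \<theta> B_nonneg assms(1) unfolding mem_annulus
      by (intro divide_left_mono mult_left_mono mult_pos_pos) auto
    also have "\<dots> = B / (1 - \<theta>) * exp (a * of_int k - 2 * a * (- real n - 3/4))"
      using \<theta> by (simp add: exp_diff)
    also have "exp (a * of_int k - 2 * a * (- real n - 3/4)) = exp (2 * a * (real n + 3/4)) * exp (- a * \<bar>of_int k\<bar>)"
      using \<open>k < - int n\<close> by (simp add: algebra_simps flip: exp_add)
    finally show ?thesis
      by (simp add: \<theta>_def)
  qed
qed

lemma tail_majorant_summable:
  "(\<lambda>k. B / (1 - exp (- a / 2)) * exp (2 * a * (real n + 3/4)) * exp (- a * \<bar>of_int k\<bar>))
     summable_on (UNIV - {- int n..<int n})"
  using summable_on_exp_neg_abs_int[OF a_pos]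
  by (intro summable_on_subset_banach[OF summable_on_cmult_right]) auto

lemma cleared_holomorphic: "cleared n holomorphic_on annulus n"
proof -
  have "stieltjes_tail n holomorphic_on annulus n"
    unfolding stieltjes_tail_def
  proof (rule holomorphic_on_infsum[OF open_annulus])
    fix w assume "w \<in> annulus n"
    then obtain r where "r > 0" "cball w r \<subseteq> annulus n"
      using open_annulus open_contains_cball by blast
    then show "\<exists>r>0. cball w r \<subseteq> annulus n \<and> (\<exists>M. M summable_on UNIV - {- int n..<int n} \<and>
        (\<forall>k\<in>UNIV - {- int n..<int n}. \<forall>t\<in>cball w r. norm (weight k / (t + complex_of_real (node k))) \<le> M k))"
      using norm_tail_term_le tail_majorant_summable by blast
  next
    fix k assume "k \<in> UNIV - {- int n..<int n}"
    then show "(\<lambda>t. weight k / (t + complex_of_real (node k))) holomorphic_on annulus n"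
      using annulus_no_pole by (intro holomorphic_intros) auto
  qed
  then show ?thesis
    unfolding cleared_def node_poly_def by (intro holomorphic_intros)
qed

lemma cleared_eq:
  assumes "t \<in> annulus n" "node_poly n t \<noteq> 0"
  shows "cleared n t = stieltjes t * node_poly n t"
proof -
  let ?S = "{- int n..<int n}" and ?u = "\<lambda>k. weight k / (t + complex_of_real (node k))"
  have no_pole: "t + complex_of_real (node k) \<noteq> 0" if "k \<in> ?S" for k
    using assms(2) that by (auto simp: node_poly_def)
  have "?u summable_on (UNIV - ?S)"
    using norm_tail_term_le[OF assms(1)] by (intro summable_on_norm_le(1)[OF tail_majorant_summable]) auto
  then have "infsum ?u (?S \<union> (UNIV - ?S)) = infsum ?u ?S + infsum ?u (UNIV - ?S)"
    by (intro infsum_Un_disjoint) auto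
  then have "stieltjes t = (\<Sum>k\<in>?S. ?u k) + stieltjes_tail n t"
    unfolding stieltjes_def stieltjes_tail_def by simp
  moreover have "(\<Sum>k\<in>?S. ?u k) * node_poly n t
      = (\<Sum>k\<in>?S. weight k * (\<Prod>j\<in>?S - {k}. t + complex_of_real (node j)))"
    unfolding sum_distrib_right node_poly_def
  proof (rule sum.cong[OF refl])
    fix k assume "k \<in> ?S"
    then show "?u k * (\<Prod>j\<in>?S. t + complex_of_real (node j))
        = weight k * (\<Prod>j\<in>?S - {k}. t + complex_of_real (node j))"
      using no_pole by (simp add: prod.remove)
  qed
  ultimately show ?thesis
    unfolding cleared_def by (simp add: algebra_simps)
qed

lemma node_poly_nonzero:
  assumes "\<And>k. k \<in> {- int n..<int n} \<Longrightarrow> t + complex_of_real (node k) \<noteq> 0"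
  shows "node_poly n t \<noteq> 0"
  using assms by (simp add: node_poly_def)

lemma node_poly_nonzero_norm:
  assumes "\<And>k. k \<in> {- int n..<int n} \<Longrightarrow> norm t \<noteq> node k"
  shows "node_poly n t \<noteq> 0"
proof (rule node_poly_nonzero)
  fix k assume "k \<in> {- int n..<int n}"
  then show "t + complex_of_real (node k) \<noteq> 0"
    using assms by (metis add_eq_0_iff abs_of_pos node_pos norm_minus_cancel norm_of_real)
qed

lemma circle_in_annulus:
  assumes "- real n - 3/4 < s" "s < real n - 1/4" "norm t = exp (2 * a * s)"
  shows "t \<in> annulus n"
  unfolding mem_annulus assms(3) using assms(1,2) a_pos by simp

lemma closed_annulus_subset:
  "cball 0 (exp (2 * a * (real n - 1/2))) - ball 0 (exp (2 * a * (- real n - 1/2))) \<subseteq> annulus n"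
proof
  fix w :: complex
  assume "w \<in> cball 0 (exp (2 * a * (real n - 1/2))) - ball 0 (exp (2 * a * (- real n - 1/2)))"
  then have "exp (2 * a * (- real n - 1/2)) \<le> norm w" "norm w \<le> exp (2 * a * (real n - 1/2))"
    by auto
  moreover have "exp (2 * a * (- real n - 3/4)) < exp (2 * a * (- real n - 1/2))"
    "exp (2 * a * (real n - 1/2)) < exp (2 * a * (real n - 1/4))"
    using a_pos by simp_all
  ultimately show "w \<in> annulus n"
    unfolding mem_annulus by (intro conjI) linarith+
qed

lemma no_pole_right_half_plane:
  assumes "Re t > 0"
  shows "t + complex_of_real (node k) \<noteq> 0"
proof -
  have "Re (t + complex_of_real (node k)) > 0"
    using assms by (simp add: add_pos_pos)
  then show ?thesis
    by (metis less_irrefl zero_complex.sel(1))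
qed

lemma stieltjes_holomorphic: "stieltjes holomorphic_on {t. Re t > 0}"
proof -
  have "stieltjes holomorphic_on {t. Re t > 0} \<inter> annulus n" for n
  proof (rule holomorphic_transform[of "\<lambda>t. cleared n t / node_poly n t"])
    show "(\<lambda>t. cleared n t / node_poly n t) holomorphic_on {t. Re t > 0} \<inter> annulus n"
      using no_pole_right_half_plane unfolding node_poly_def
      by (intro holomorphic_intros holomorphic_on_subset[OF cleared_holomorphic]) auto
  qed (use cleared_eq node_poly_nonzero no_pole_right_half_plane in auto)
  then have "stieltjes holomorphic_on (\<Union>n. {t. Re t > 0} \<inter> annulus n)"
    by (intro holomorphic_on_UN_open open_Int open_halfspace_Re_gt open_annulus)
  moreover have "t \<in> (\<Union>n. {t. Re t > 0} \<inter> annulus n)" if "Re t > 0" for t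
  proof -
    from that have "t \<noteq> 0"
      by auto
    then obtain n where "t \<in> annulus n"
      by (rule annulus_exhaust)
    with that show ?thesis
      by blast
  qed
  then have "(\<Union>n. {t. Re t > 0} \<inter> annulus n) = {t. Re t > 0}"
    by blast
  ultimately show ?thesis
    by simp
qed

section \<open>Dividing out the zeros\<close>

lemma stieltjes_nonzero:
  assumes "\<exists>x. f x \<noteq> 0"
  shows "\<exists>w\<in>{t. Re t > 0}. stieltjes w \<noteq> 0"
  using assms f_eq_stieltjes by force

lemma zero_mult_eq_zorder:
  assumes "\<exists>x. f x \<noteq> 0"
  shows "zero_mult f \<xi> = nat (zorder stieltjes (complex_of_real (exp (2 * a * \<xi>))))"
proof -
  have "f = (\<lambda>y. 2 * complex_of_real (exp (a * y)) * stieltjes (complex_of_real (exp (2 * a * y))))"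
    using f_eq_stieltjes by blast
  moreover note stieltjes_nonzero[OF assms]
  moreover have "((\<lambda>y. exp (2 * a * y)) has_real_derivative exp (2 * a * \<xi>) * (2 * a)) (at \<xi>)"
    by (auto intro!: derivative_eq_intros)
  ultimately show ?thesis
    using a_pos
    by (auto intro!: zero_mult_holomorphic_comp[OF stieltjes_holomorphic open_halfspace_Re_gt
          connected_halfspace_Re_gt] continuous_intros)
qed

lemma cleared_local_factor:
  assumes "\<exists>x. f x \<noteq> 0" "complex_of_real (exp (2 * a * x)) \<in> annulus n" "\<mu> \<le> zero_mult f x"
  shows "\<exists>r>0. \<exists>g. g holomorphic_on ball (complex_of_real (exp (2 * a * x))) r \<and>
    (\<forall>w\<in>ball (complex_of_real (exp (2 * a * x))) r.
       cleared n w = g w * (w - complex_of_real (exp (2 * a * x))) ^ \<mu>)"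
proof -
  define \<tau> where "\<tau> = complex_of_real (exp (2 * a * x))"
  define k where "k = nat (zorder stieltjes \<tau>)"
  note stieltjes_nonzero[OF assms(1)]
  moreover have "\<tau> \<in> {t. Re t > 0}"
    by (simp add: \<tau>_def)
  ultimately obtain r where r: "r > 0" "cball \<tau> r \<subseteq> {t. Re t > 0}" "zor_poly stieltjes \<tau> holomorphic_on cball \<tau> r"
    and factor: "\<And>w. w \<in> cball \<tau> r \<Longrightarrow> stieltjes w = zor_poly stieltjes \<tau> w * (w - \<tau>) ^ k"
    using zorder_exist_zero[OF stieltjes_holomorphic open_halfspace_Re_gt connected_halfspace_Re_gt]
    unfolding k_def by metis
  obtain e where e: "e > 0" "ball \<tau> e \<subseteq> annulus n"
    using open_annulus assms(2) open_contains_ball unfolding \<tau>_def by blast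
  have "\<mu> \<le> k"
    using assms(3) zero_mult_eq_zorder[OF assms(1)] unfolding k_def \<tau>_def by simp
  define g where "g w = zor_poly stieltjes \<tau> w * node_poly n w * (w - \<tau>) ^ (k - \<mu>)" for w
  have "ball \<tau> (min r e) \<subseteq> cball \<tau> r"
    by auto
  then have "g holomorphic_on ball \<tau> (min r e)"
    unfolding g_def node_poly_def by (intro holomorphic_intros holomorphic_on_subset[OF r(3)])
  moreover have "cleared n w = g w * (w - \<tau>) ^ \<mu>" if w: "w \<in> ball \<tau> (min r e)" for w
  proof -
    have "w \<in> cball \<tau> r" "w \<in> ball \<tau> e"
      using w by auto
    then have "Re w > 0" "w \<in> annulus n"
      using r(2) e(2) by auto
    then have "cleared n w = stieltjes w * node_poly n w"
      by (intro cleared_eq node_poly_nonzero no_pole_right_half_plane)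
    also have "\<dots> = g w * (w - \<tau>) ^ \<mu>"
      using factor[of w] w \<open>\<mu> \<le> k\<close> by (simp add: g_def mult_ac flip: power_add)
    finally show ?thesis .
  qed
  ultimately show ?thesis
    using r(1) e(1) unfolding \<tau>_def by (intro exI[of _ "min r e"]) auto
qed

definition zero_poly :: "real set \<Rightarrow> (real \<Rightarrow> nat) \<Rightarrow> complex \<Rightarrow> complex" where
  "zero_poly Z m w = (\<Prod>x\<in>Z. (w - complex_of_real (exp (2 * a * x))) ^ m x)"

lemma obtain_zero_quotient:
  assumes "\<exists>x. f x \<noteq> 0" "finite Z" "\<And>x. x \<in> Z \<Longrightarrow> - real n \<le> x \<and> x \<le> real n - 1"
    and "\<And>x. m x \<le> zero_mult f x"
  obtains h where "h holomorphic_on annulus n"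
    "\<And>w. w \<in> annulus n \<Longrightarrow> w \<notin> (\<lambda>x. complex_of_real (exp (2 * a * x))) ` Z \<Longrightarrow>
       cleared n w = h w * zero_poly Z m w"
proof -
  let ?E = "\<lambda>x. complex_of_real (exp (2 * a * x))"
  define \<nu> where "\<nu> \<tau> = m (ln (Re \<tau>) / (2 * a))" for \<tau>
  have \<nu>: "\<nu> (?E x) = m x" for x
    using a_pos by (simp add: \<nu>_def)
  have in_annulus: "?E x \<in> annulus n" if "x \<in> Z" for x
    using assms(3)[OF that] by (intro circle_in_annulus[of n x]) auto
  have factor: "\<exists>r>0. \<exists>g. g holomorphic_on ball \<tau> r \<and> (\<forall>w\<in>ball \<tau> r. cleared n w = g w * (w - \<tau>) ^ \<nu> \<tau>)"
    if "\<tau> \<in> ?E ` Z" for \<tau>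
  proof -
    from that obtain x where "x \<in> Z" "\<tau> = ?E x"
      by blast
    then show ?thesis
      using cleared_local_factor[OF assms(1) in_annulus assms(4)] \<nu> by simp
  qed
  have sub: "?E ` Z \<subseteq> annulus n"
    using in_annulus by blast
  obtain h where "h holomorphic_on annulus n"
    and "\<And>w. w \<in> annulus n - ?E ` Z \<Longrightarrow> cleared n w = h w * (\<Prod>\<sigma>\<in>?E ` Z. (w - \<sigma>) ^ \<nu> \<sigma>)"
    using holomorphic_divide_zeros[OF open_annulus cleared_holomorphic finite_imageI[OF assms(2)] sub factor]
    by blast
  moreover have "inj_on ?E Z"
    using a_pos by (auto simp: inj_on_def)
  then have "(\<Prod>\<sigma>\<in>?E ` Z. (w - \<sigma>) ^ \<nu> \<sigma>) = zero_poly Z m w" for w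
    unfolding zero_poly_def by (simp add: prod.reindex \<nu>)
  ultimately show ?thesis
    using that by simp
qed

definition circle_const :: real where
  "circle_const = B * exp a / (1 - exp (- a)) * (\<Sum>\<^sub>\<infinity>k::int. exp (- a * \<bar>of_int k\<bar>))"

lemma circle_const_nonneg: "circle_const \<ge> 0"
  using a_pos B_nonneg unfolding circle_const_def
  by (intro mult_nonneg_nonneg divide_nonneg_pos infsum_nonneg) auto

lemma norm_circle_term_le:
  assumes "norm t = exp (2 * a * (of_int M - 1/2))"
  shows "norm (weight k / (t + complex_of_real (node k)))
    \<le> B / (1 - exp (- a)) * (exp a * exp (- a * of_int M) * exp (- a * \<bar>of_int k - of_int M\<bar>))"
proof -
  define \<theta> where "\<theta> = exp (- a)"
  have \<theta>: "0 \<le> \<theta>" "\<theta> < 1"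
    using a_pos by (auto simp: \<theta>_def)
  show ?thesis
  proof (cases "k \<le> M - 1")
    case True
    have "node k \<le> exp (2 * a * (of_int M - 1))"
      using True a_pos by (simp add: node_def)
    also have "\<dots> = \<theta> * norm t"
      unfolding assms \<theta>_def by (simp add: algebra_simps flip: exp_add)
    finally have "norm (weight k / (t + complex_of_real (node k))) \<le> B * exp (a * of_int k) / ((1 - \<theta>) * norm t)"
      by (rule norm_term_le_small_node[OF \<theta>])
    also have "\<dots> = B / (1 - \<theta>) * exp (a * of_int k - 2 * a * (of_int M - 1/2))"
      unfolding assms using \<theta> by (simp add: exp_diff)
    also have "exp (a * of_int k - 2 * a * (of_int M - 1/2))
        = exp a * exp (- a * of_int M) * exp (- a * \<bar>of_int k - of_int M\<bar>)"
      using True by (simp add: algebra_simps flip: exp_add)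
    finally show ?thesis
      by (simp add: \<theta>_def)
  next
    case False
    have "norm t = \<theta> * exp (2 * a * of_int M)"
      unfolding assms \<theta>_def by (simp add: algebra_simps flip: exp_add)
    also have "\<dots> \<le> \<theta> * node k"
      using False a_pos \<theta> by (intro mult_left_mono) (auto simp: node_def)
    finally have "norm (weight k / (t + complex_of_real (node k))) \<le> B * exp (a * of_int k) / ((1 - \<theta>) * node k)"
      by (rule norm_term_le_large_node[OF \<theta>])
    also have "\<dots> = B / (1 - \<theta>) * (exp (a * of_int k) / node k)"
      using \<theta> by (simp add: field_simps)
    also have "\<dots> = B / (1 - \<theta>) * exp (- a * of_int k)"
      by (simp add: exp_divide_node)
    also have "\<dots> \<le> B / (1 - \<theta>) * (exp a * exp (- a * of_int M) * exp (- a * \<bar>of_int k - of_int M\<bar>))"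
      using False a_pos \<theta> B_nonneg by (intro mult_left_mono) (simp_all add: algebra_simps flip: exp_add)
    finally show ?thesis
      by (simp add: \<theta>_def)
  qed
qed

lemma norm_stieltjes_circle_le:
  assumes "norm t = exp (2 * a * (of_int M - 1/2))"
  shows "norm (stieltjes t) \<le> exp (ln (circle_const + 1) - a * of_int M)"
proof -
  define C where "C = B / (1 - exp (- a)) * (exp a * exp (- a * of_int M))"
  have shift: "((\<lambda>k. exp (- a * \<bar>of_int k - of_int M\<bar>)) has_sum (\<Sum>\<^sub>\<infinity>k::int. exp (- a * \<bar>of_int k\<bar>))) UNIV"
    by (rule has_sum_exp_neg_abs_int_shift[OF a_pos])
  have "norm (weight k / (t + complex_of_real (node k))) \<le> C * exp (- a * \<bar>of_int k - of_int M\<bar>)" for k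
    unfolding C_def using norm_circle_term_le[OF assms, of k] by (simp only: mult.assoc)
  then have "norm (stieltjes t) \<le> (\<Sum>\<^sub>\<infinity>k. C * exp (- a * \<bar>of_int k - of_int M\<bar>))"
    unfolding stieltjes_def
    by (intro summable_on_norm_le(2)[OF summable_on_cmult_right[OF has_sum_imp_summable[OF shift]]])
  also have "\<dots> = C * (\<Sum>\<^sub>\<infinity>k::int. exp (- a * \<bar>of_int k\<bar>))"
    using shift by (simp add: infsum_cmult_right' infsumI)
  also have "\<dots> = circle_const * exp (- a * of_int M)"
    by (simp add: C_def circle_const_def mult_ac)
  also have "\<dots> \<le> (circle_const + 1) * exp (- a * of_int M)"
    by (simp add: mult_right_mono)
  also have "\<dots> = exp (ln (circle_const + 1) - a * of_int M)"
    using circle_const_nonneg by (simp add: exp_diff exp_minus field_simps)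
  finally show ?thesis .
qed

lemma norm_node_poly_outer_le:
  assumes "norm w = exp (2 * a * (real n - 1/2))"
  shows "norm (node_poly n w) \<le> exp (2 * real n * (ln 2 + 2 * a * (real n - 1/2)))"
proof -
  have "norm (node_poly n w) \<le> exp (\<Sum>k\<in>{- int n..<int n}. ln 2 + 2 * a * (real n - 1/2))"
    unfolding node_poly_def
  proof (rule norm_prod_le_exp)
    fix k assume "k \<in> {- int n..<int n}"
    then have "2 * a * of_int k \<le> 2 * a * (real n - 1/2)"
      using a_pos by (intro mult_left_mono) auto
    then have "norm (complex_of_real (node k)) \<le> norm w"
      using assms by (simp add: node_def abs_of_pos)
    then have "norm (w + complex_of_real (node k)) \<le> 2 * exp (2 * a * (real n - 1/2))"
      using norm_triangle_ineq[of w "complex_of_real (node k)"] assms by linarith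
    then show "norm (w + complex_of_real (node k)) \<le> exp (ln 2 + 2 * a * (real n - 1/2))"
      by (simp add: exp_add)
  qed simp
  then show ?thesis
    by simp
qed

lemma norm_node_poly_inner_le:
  assumes "norm w = exp (2 * a * (- real n - 1/2))"
  shows "norm (node_poly n w) \<le> exp (2 * real n * ln 2 - 2 * a * real n)"
proof -
  have "norm (node_poly n w) \<le> exp (\<Sum>k\<in>{- int n..<int n}. ln 2 + 2 * a * of_int k)"
    unfolding node_poly_def
  proof (rule norm_prod_le_exp)
    fix k assume "k \<in> {- int n..<int n}"
    then have "2 * a * (- real n - 1/2) \<le> 2 * a * of_int k"
      using a_pos by (intro mult_left_mono) auto
    then have "norm w \<le> norm (complex_of_real (node k))"
      using assms by (simp add: node_def abs_of_pos)
    then have "norm (w + complex_of_real (node k)) \<le> 2 * node k"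
      using norm_triangle_ineq[of w "complex_of_real (node k)"] by (simp add: abs_of_pos)
    then show "norm (w + complex_of_real (node k)) \<le> exp (ln 2 + 2 * a * of_int k)"
      by (simp add: exp_add node_def)
  qed simp
  also have "(\<Sum>k\<in>{- int n..<int n}. ln 2 + 2 * a * of_int k) = 2 * real n * ln 2 - 2 * a * real n"
    by (simp add: sum.distrib sum_symmetric_int_range flip: sum_distrib_left)
  finally show ?thesis .
qed

lemma norm_node_poly_centre_ge:
  "exp (a * real n * (real n - 1) - 4 * a * real n * \<bar>\<xi>\<bar>)
     \<le> norm (node_poly n (complex_of_real (exp (2 * a * \<xi>))))"
proof -
  have "exp (\<Sum>k\<in>{- int n..<int n}. 2 * a * (max 0 (of_int k) - \<bar>\<xi>\<bar>))
      \<le> norm (node_poly n (complex_of_real (exp (2 * a * \<xi>))))"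
    unfolding node_poly_def
  proof (rule norm_prod_ge_exp)
    fix k :: int
    have "exp (2 * a * (max 0 (of_int k) - \<bar>\<xi>\<bar>)) \<le> exp (2 * a * \<xi>) + node k"
    proof (cases "k \<ge> 0")
      case True
      then have "exp (2 * a * (max 0 (of_int k) - \<bar>\<xi>\<bar>)) \<le> node k"
        using a_pos by (simp add: node_def)
      then show ?thesis
        by (smt (verit) exp_gt_zero)
    next
      case False
      then have "2 * a * (max 0 (of_int k) - \<bar>\<xi>\<bar>) \<le> 2 * a * \<xi>"
        using a_pos by (intro mult_left_mono) auto
      then have "exp (2 * a * (max 0 (of_int k) - \<bar>\<xi>\<bar>)) \<le> exp (2 * a * \<xi>)"
        by simp
      then show ?thesis
        using node_pos[of k] by linarith
    qed
    also have "\<dots> = norm (complex_of_real (exp (2 * a * \<xi>)) + complex_of_real (node k))"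
      by (simp add: abs_of_pos add_pos_pos flip: of_real_add)
    finally show "exp (2 * a * (max 0 (of_int k) - \<bar>\<xi>\<bar>))
        \<le> norm (complex_of_real (exp (2 * a * \<xi>)) + complex_of_real (node k))" .
  qed simp
  also have "(\<Sum>k\<in>{- int n..<int n}. 2 * a * (max 0 (of_int k) - \<bar>\<xi>\<bar>))
      = a * real n * (real n - 1) - 4 * a * real n * \<bar>\<xi>\<bar>"
    by (simp add: sum_subtractf right_diff_distrib sum_symmetric_int_range_pos_part flip: sum_distrib_left)
  finally show ?thesis .
qed

lemma norm_zero_poly_outer_ge:
  assumes "finite Z" "\<And>x. x \<in> Z \<Longrightarrow> x \<le> real n - 1" "norm w = exp (2 * a * (real n - 1/2))"
  shows "exp ((2 * a * (real n - 1/2) + ln (1 - exp (- a))) * mass Z m) \<le> norm (zero_poly Z m w)"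
proof -
  have "exp (\<Sum>x\<in>Z. real (m x) * (2 * a * (real n - 1/2) + ln (1 - exp (- a))))
      \<le> norm (zero_poly Z m w)"
    unfolding zero_poly_def
  proof (rule norm_prod_power_ge_exp[OF assms(1)])
    fix x assume "x \<in> Z"
    then have "2 * a * x \<le> 2 * a * (real n - 1)"
      using assms(2) a_pos by (intro mult_left_mono) auto
    then have "2 * a * x \<le> 2 * a * (real n - 1/2) - a"
      by (simp add: algebra_simps)
    then have "exp (2 * a * x) \<le> exp (2 * a * (real n - 1/2)) * exp (- a)"
      by (simp flip: exp_add)
    then have "exp (2 * a * (real n - 1/2)) * (1 - exp (- a)) \<le> norm (w - complex_of_real (exp (2 * a * x)))"
      using norm_triangle_ineq2[of w "complex_of_real (exp (2 * a * x))"] assms(3)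
      by (simp add: right_diff_distrib)
    then show "exp (2 * a * (real n - 1/2) + ln (1 - exp (- a))) \<le> norm (w - complex_of_real (exp (2 * a * x)))"
      using a_pos by (simp add: exp_add)
  qed
  then show ?thesis
    by (simp add: mass_def sum_distrib_right mult_ac)
qed

lemma norm_zero_poly_inner_ge:
  assumes "finite Z" "\<And>x. x \<in> Z \<Longrightarrow> - real n \<le> x" "norm w = exp (2 * a * (- real n - 1/2))"
  shows "exp (2 * a * moment Z m + ln (1 - exp (- a)) * mass Z m) \<le> norm (zero_poly Z m w)"
proof -
  have "exp (\<Sum>x\<in>Z. real (m x) * (2 * a * x + ln (1 - exp (- a)))) \<le> norm (zero_poly Z m w)"
    unfolding zero_poly_def
  proof (rule norm_prod_power_ge_exp[OF assms(1)])
    fix x assume "x \<in> Z"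
    then have "2 * a * (- real n) \<le> 2 * a * x"
      using assms(2) a_pos by (intro mult_left_mono) auto
    then have "2 * a * (- real n - 1/2) \<le> 2 * a * x - a"
      by (simp add: algebra_simps)
    then have "norm w \<le> exp (2 * a * x) * exp (- a)"
      using assms(3) by (simp flip: exp_add)
    then have "exp (2 * a * x) * (1 - exp (- a)) \<le> norm (w - complex_of_real (exp (2 * a * x)))"
      using norm_triangle_ineq2[of "complex_of_real (exp (2 * a * x))" w]
      by (simp add: right_diff_distrib norm_minus_commute)
    then show "exp (2 * a * x + ln (1 - exp (- a))) \<le> norm (w - complex_of_real (exp (2 * a * x)))"
      using a_pos by (simp add: exp_add)
  qed
  also have "(\<Sum>x\<in>Z. real (m x) * (2 * a * x + ln (1 - exp (- a))))
      = 2 * a * moment Z m + ln (1 - exp (- a)) * mass Z m"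
    by (simp add: mass_def moment_def distrib_left sum.distrib sum_distrib_left sum_distrib_right mult_ac)
  finally show ?thesis .
qed

lemma norm_zero_poly_centre_le:
  assumes "finite Z"
  shows "norm (zero_poly Z m (complex_of_real (exp (2 * a * \<xi>))))
    \<le> exp ((ln 2 + 2 * a * \<bar>\<xi>\<bar>) * mass Z m + 2 * a * pos_moment Z m)"
proof -
  have "norm (zero_poly Z m (complex_of_real (exp (2 * a * \<xi>))))
      \<le> exp (\<Sum>x\<in>Z. real (m x) * (ln 2 + 2 * a * \<bar>\<xi>\<bar> + 2 * a * max 0 x))"
    unfolding zero_poly_def
  proof (rule norm_prod_power_le_exp[OF assms(1)])
    fix x
    have "2 * a * \<xi> \<le> 2 * a * \<bar>\<xi>\<bar> + 2 * a * max 0 x" "2 * a * x \<le> 2 * a * \<bar>\<xi>\<bar> + 2 * a * max 0 x"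
      using a_pos by (simp_all add: mult_left_mono flip: distrib_left)
    then have "exp (2 * a * \<xi>) + exp (2 * a * x) \<le> 2 * exp (2 * a * \<bar>\<xi>\<bar> + 2 * a * max 0 x)"
      by (smt (verit) exp_le_cancel_iff)
    then show "norm (complex_of_real (exp (2 * a * \<xi>)) - complex_of_real (exp (2 * a * x)))
        \<le> exp (ln 2 + 2 * a * \<bar>\<xi>\<bar> + 2 * a * max 0 x)"
      using norm_triangle_ineq4[of "complex_of_real (exp (2 * a * \<xi>))" "complex_of_real (exp (2 * a * x))"]
      by (simp add: exp_add)
  qed
  also have "(\<Sum>x\<in>Z. real (m x) * (ln 2 + 2 * a * \<bar>\<xi>\<bar> + 2 * a * max 0 x))
      = (ln 2 + 2 * a * \<bar>\<xi>\<bar>) * mass Z m + 2 * a * pos_moment Z m"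
    by (simp add: mass_def pos_moment_def distrib_left sum.distrib sum_distrib_left mult_ac)
  finally show ?thesis .
qed

text \<open>Logarithms of the bounds for \<open>|w^N h(w)|\<close> on the circles \<open>|w| = e^(2a(n - 1/2))\<close> and
  \<open>|w| = e^(2a(-n - 1/2))\<close> and at \<open>w = e^(2a\<xi>)\<close>, where \<open>h\<close> is \<open>cleared n\<close> divided by the
  zeros; \<open>M0\<close>, \<open>M1\<close>, \<open>Mp\<close> stand for their mass, moment and positive moment.\<close>

definition outer_exponent :: "nat \<Rightarrow> nat \<Rightarrow> real \<Rightarrow> real" where
  "outer_exponent n N M0 = 2 * a * (real n - 1/2) * real N + (ln (circle_const + 1) - a * real n)
     + 2 * real n * (ln 2 + 2 * a * (real n - 1/2)) - (2 * a * (real n - 1/2) + ln (1 - exp (- a))) * M0"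

definition inner_exponent :: "nat \<Rightarrow> nat \<Rightarrow> real \<Rightarrow> real \<Rightarrow> real" where
  "inner_exponent n N M0 M1 = 2 * a * (- real n - 1/2) * real N + (ln (circle_const + 1) + a * real n)
     + (2 * real n * ln 2 - 2 * a * real n) - (2 * a * M1 + ln (1 - exp (- a)) * M0)"

definition centre_exponent :: "nat \<Rightarrow> nat \<Rightarrow> real \<Rightarrow> real \<Rightarrow> real \<Rightarrow> real" where
  "centre_exponent n N \<xi> M0 Mp = 2 * a * \<xi> * real N + ln (norm (stieltjes (complex_of_real (exp (2 * a * \<xi>)))))
     + (a * real n * (real n - 1) - 4 * a * real n * \<bar>\<xi>\<bar>) - ((ln 2 + 2 * a * \<bar>\<xi>\<bar>) * M0 + 2 * a * Mp)"

context
  fixes Z :: "real set" and m :: "real \<Rightarrow> nat" and n :: nat and h :: "complex \<Rightarrow> complex"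
  assumes Z_finite: "finite Z"
    and Z_range: "\<And>x. x \<in> Z \<Longrightarrow> - real n \<le> x \<and> x \<le> real n - 1"
    and h_holomorphic: "h holomorphic_on annulus n"
    and h_eq: "\<And>w. w \<in> annulus n \<Longrightarrow> w \<notin> (\<lambda>x. complex_of_real (exp (2 * a * x))) ` Z \<Longrightarrow>
                  cleared n w = h w * zero_poly Z m w"
begin

lemma norm_quotient_eq:
  assumes "w \<in> annulus n" "\<And>x. x \<in> Z \<Longrightarrow> w \<noteq> complex_of_real (exp (2 * a * x))" "node_poly n w \<noteq> 0"
  shows "norm (w ^ N * h w) = norm w ^ N * norm (stieltjes w) * norm (node_poly n w) / norm (zero_poly Z m w)"
    and "zero_poly Z m w \<noteq> 0"
proof -
  show nz: "zero_poly Z m w \<noteq> 0"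
    using Z_finite assms(2) by (auto simp: zero_poly_def)
  have "stieltjes w * node_poly n w = h w * zero_poly Z m w"
    using cleared_eq[OF assms(1,3)] h_eq[OF assms(1)] assms(2) by auto
  then have "h w = stieltjes w * node_poly n w / zero_poly Z m w"
    using nz by (simp add: field_simps)
  then show "norm (w ^ N * h w) = norm w ^ N * norm (stieltjes w) * norm (node_poly n w) / norm (zero_poly Z m w)"
    by (simp add: norm_mult norm_divide norm_power)
qed

lemma norm_quotient_outer_le:
  assumes "norm w = exp (2 * a * (real n - 1/2))"
  shows "norm (w ^ N * h w) \<le> exp (outer_exponent n N (mass Z m))"
proof -
  have below: "exp (2 * a * y) < norm w" if "y \<le> real n - 1" for y
  proof -
    have "2 * a * y \<le> 2 * a * (real n - 1)"
      using that a_pos by (intro mult_left_mono) auto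
    then show ?thesis
      using assms a_pos by (simp add: algebra_simps)
  qed
  have "w \<in> annulus n"
    using assms by (intro circle_in_annulus) auto
  moreover have "w \<noteq> complex_of_real (exp (2 * a * x))" if "x \<in> Z" for x
    using below[of x] Z_range[OF that] by auto
  moreover have "node_poly n w \<noteq> 0"
  proof (rule node_poly_nonzero_norm)
    fix k assume "k \<in> {- int n..<int n}"
    then show "norm w \<noteq> node k"
      using below[of "of_int k"] by (auto simp: node_def)
  qed
  ultimately have "norm (w ^ N * h w) = norm w ^ N * norm (stieltjes w) * norm (node_poly n w) / norm (zero_poly Z m w)"
    by (rule norm_quotient_eq)
  also have "\<dots> \<le> exp (outer_exponent n N (mass Z m))"
    unfolding outer_exponent_def
  proof (rule mult_divide_le_exp)
    show "norm w ^ N \<le> exp (2 * a * (real n - 1/2) * real N)"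
      by (simp add: assms mult.commute flip: exp_of_nat_mult)
    show "norm (stieltjes w) \<le> exp (ln (circle_const + 1) - a * real n)"
      using norm_stieltjes_circle_le[of w "int n"] assms by simp
    show "norm (node_poly n w) \<le> exp (2 * real n * (ln 2 + 2 * a * (real n - 1/2)))"
      by (rule norm_node_poly_outer_le[OF assms])
    show "exp ((2 * a * (real n - 1/2) + ln (1 - exp (- a))) * mass Z m) \<le> norm (zero_poly Z m w)"
      using Z_range by (intro norm_zero_poly_outer_ge[OF Z_finite _ assms]) auto
  qed auto
  finally show ?thesis .
qed

lemma norm_quotient_inner_le:
  assumes "norm w = exp (2 * a * (- real n - 1/2))"
  shows "norm (w ^ N * h w) \<le> exp (inner_exponent n N (mass Z m) (moment Z m))"
proof -
  have above: "norm w < exp (2 * a * y)" if "- real n \<le> y" for y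
  proof -
    have "2 * a * (- real n) \<le> 2 * a * y"
      using that a_pos by (intro mult_left_mono) auto
    then show ?thesis
      using assms a_pos by (simp add: algebra_simps)
  qed
  have "w \<in> annulus n"
    using assms by (intro circle_in_annulus) auto
  moreover have "w \<noteq> complex_of_real (exp (2 * a * x))" if "x \<in> Z" for x
    using above[of x] Z_range[OF that] by auto
  moreover have "node_poly n w \<noteq> 0"
  proof (rule node_poly_nonzero_norm)
    fix k assume "k \<in> {- int n..<int n}"
    then show "norm w \<noteq> node k"
      using above[of "of_int k"] by (auto simp: node_def)
  qed
  ultimately have "norm (w ^ N * h w) = norm w ^ N * norm (stieltjes w) * norm (node_poly n w) / norm (zero_poly Z m w)"
    by (rule norm_quotient_eq)
  also have "\<dots> \<le> exp (inner_exponent n N (mass Z m) (moment Z m))"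
    unfolding inner_exponent_def
  proof (rule mult_divide_le_exp)
    show "norm w ^ N \<le> exp (2 * a * (- real n - 1/2) * real N)"
      by (simp add: assms mult.commute flip: exp_of_nat_mult)
    show "norm (stieltjes w) \<le> exp (ln (circle_const + 1) + a * real n)"
      using norm_stieltjes_circle_le[of w "- int n"] assms by simp
    show "norm (node_poly n w) \<le> exp (2 * real n * ln 2 - 2 * a * real n)"
      by (rule norm_node_poly_inner_le[OF assms])
    show "exp (2 * a * moment Z m + ln (1 - exp (- a)) * mass Z m) \<le> norm (zero_poly Z m w)"
      using Z_range by (intro norm_zero_poly_inner_ge[OF Z_finite _ assms]) auto
  qed auto
  finally show ?thesis .
qed

lemma norm_quotient_centre_ge:
  assumes "f \<xi> \<noteq> 0" "\<xi> \<notin> Z" "\<bar>\<xi>\<bar> + 1 \<le> real n"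
  defines "w \<equiv> complex_of_real (exp (2 * a * \<xi>))"
  shows "exp (centre_exponent n N \<xi> (mass Z m) (pos_moment Z m)) \<le> norm (w ^ N * h w)"
proof -
  have w_in: "w \<in> annulus n"
    using assms(3) by (intro circle_in_annulus[of n \<xi>]) (auto simp: w_def)
  have w_ne: "w \<noteq> complex_of_real (exp (2 * a * x))" if "x \<in> Z" for x
    using that assms(2) a_pos by (auto simp: w_def)
  have "node_poly n w \<noteq> 0"
    by (rule node_poly_nonzero, rule no_pole_right_half_plane) (simp add: w_def)
  note quotient = norm_quotient_eq[OF w_in w_ne this]
  have eq: "norm (w ^ N * h w) = norm w ^ N * norm (stieltjes w) * norm (node_poly n w) / norm (zero_poly Z m w)"
    by (rule quotient(1))
  have nz: "zero_poly Z m w \<noteq> 0"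
    by (rule quotient(2))
  have "stieltjes w \<noteq> 0"
    using assms(1) f_eq_stieltjes[of \<xi>] by (auto simp: w_def)
  have "exp (centre_exponent n N \<xi> (mass Z m) (pos_moment Z m))
      \<le> norm w ^ N * norm (stieltjes w) * norm (node_poly n w) / norm (zero_poly Z m w)"
    unfolding centre_exponent_def w_def
  proof (rule exp_le_mult_divide)
    show "exp (2 * a * \<xi> * real N) \<le> norm (complex_of_real (exp (2 * a * \<xi>))) ^ N"
      by (simp add: mult.commute flip: exp_of_nat_mult)
    show "exp (ln (norm (stieltjes (complex_of_real (exp (2 * a * \<xi>))))))
        \<le> norm (stieltjes (complex_of_real (exp (2 * a * \<xi>))))"
      using \<open>stieltjes w \<noteq> 0\<close> by (simp add: w_def)
    show "exp (a * real n * (real n - 1) - 4 * a * real n * \<bar>\<xi>\<bar>)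
        \<le> norm (node_poly n (complex_of_real (exp (2 * a * \<xi>))))"
      by (rule norm_node_poly_centre_ge)
    show "0 < norm (zero_poly Z m (complex_of_real (exp (2 * a * \<xi>))))"
      using nz by (simp add: w_def)
    show "norm (zero_poly Z m (complex_of_real (exp (2 * a * \<xi>))))
        \<le> exp ((ln 2 + 2 * a * \<bar>\<xi>\<bar>) * mass Z m + 2 * a * pos_moment Z m)"
      by (rule norm_zero_poly_centre_le[OF Z_finite])
  qed
  with eq show ?thesis
    by simp
qed

lemma centre_exponent_le_boundary:
  assumes "f \<xi> \<noteq> 0" "\<xi> \<notin> Z" "\<bar>\<xi>\<bar> + 1 \<le> real n"
  shows "centre_exponent n N \<xi> (mass Z m) (pos_moment Z m)
           \<le> max (outer_exponent n N (mass Z m)) (inner_exponent n N (mass Z m) (moment Z m))"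
    (is "?L \<le> ?U")
proof -
  define r where "r = exp (2 * a * (- real n - 1/2))"
  define R where "R = exp (2 * a * (real n - 1/2))"
  have sub: "cball 0 R - ball 0 r \<subseteq> annulus n"
    unfolding r_def R_def by (rule closed_annulus_subset)
  have hol: "(\<lambda>w. w ^ N * h w) holomorphic_on annulus n"
    by (intro holomorphic_intros h_holomorphic)
  have "2 * a * (- real n - 1/2) \<le> 2 * a * \<xi>" "2 * a * \<xi> \<le> 2 * a * (real n - 1/2)"
    using assms(3) a_pos by (auto intro!: mult_left_mono)
  then have lo: "r \<le> norm (complex_of_real (exp (2 * a * \<xi>)))"
    and hi: "norm (complex_of_real (exp (2 * a * \<xi>))) \<le> R"
    by (simp_all add: r_def R_def)
  have inner: "norm (w ^ N * h w) \<le> exp ?U" if "norm w = r" for w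
  proof -
    have "norm (w ^ N * h w) \<le> exp (inner_exponent n N (mass Z m) (moment Z m))"
      using that by (intro norm_quotient_inner_le) (simp add: r_def)
    also have "\<dots> \<le> exp ?U"
      by simp
    finally show ?thesis .
  qed
  have outer: "norm (w ^ N * h w) \<le> exp ?U" if "norm w = R" for w
  proof -
    have "norm (w ^ N * h w) \<le> exp (outer_exponent n N (mass Z m))"
      using that by (intro norm_quotient_outer_le) (simp add: R_def)
    also have "\<dots> \<le> exp ?U"
      by simp
    finally show ?thesis .
  qed
  have "exp ?L \<le> norm (complex_of_real (exp (2 * a * \<xi>)) ^ N * h (complex_of_real (exp (2 * a * \<xi>))))"
    by (rule norm_quotient_centre_ge[OF assms])
  also have "\<dots> \<le> exp ?U"
    by (rule annulus_maximum_modulus[OF hol sub _ inner outer lo hi]) (simp add: r_def)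
  finally show ?thesis
    by simp
qed

end

lemma eventually_exponent_gap:
  assumes "D \<ge> 1"
  defines "M0 N \<equiv> 2 * real N * (real D + 1)"
    and "M1 N \<equiv> - ((real D + 1) * real D * real N)"
    and "Mp N \<equiv> (real D + 1) * (real D * (real N * (real N - 1) / 2) + 2 * real N * real D)"
  shows "\<forall>\<^sub>F N in sequentially.
    outer_exponent (N * D) N (M0 N) < centre_exponent (N * D) N \<xi> (M0 N) (Mp N) \<and>
    inner_exponent (N * D) N (M0 N) (M1 N) < centre_exponent (N * D) N \<xi> (M0 N) (Mp N)"
proof -
  define d where "d = real D"
  define K where "K = ln (circle_const + 1)"
  define T where "T = ln (1 - exp (- a))"
  define P where "P = ln (norm (stieltjes (complex_of_real (exp (2 * a * \<xi>)))))"
  define L where "L = 2 * a * \<xi> - a * d - 4 * a * d * \<bar>\<xi>\<bar> - 2 * (d + 1) * (ln 2 + 2 * a * \<bar>\<xi>\<bar>)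
    - 3 * a * d * (d + 1)"
  define b1 where "b1 = L - (a - a * d + 2 * d * ln 2 - 2 * T * (d + 1))"
  define b0 where "b0 = L - (- a - a * d + 2 * d * ln 2 + 2 * a * d * (d + 1) - 2 * T * (d + 1))"
  \<comment> \<open>On the circles the exponents behave like \<open>-2aDN^2\<close>, at the centre like \<open>-aDN^2\<close>.\<close>
  have outer: "centre_exponent (N * D) N \<xi> (M0 N) (Mp N) - outer_exponent (N * D) N (M0 N)
      = a * d * real N ^ 2 + b1 * real N + (P - K)" for N
    unfolding centre_exponent_def outer_exponent_def M0_def Mp_def b1_def L_def d_def K_def T_def P_def
    by (simp add: algebra_simps power2_eq_square) (simp add: field_simps)
  have inner: "centre_exponent (N * D) N \<xi> (M0 N) (Mp N) - inner_exponent (N * D) N (M0 N) (M1 N)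
      = a * d * real N ^ 2 + b0 * real N + (P - K)" for N
    unfolding centre_exponent_def inner_exponent_def M0_def M1_def Mp_def b0_def L_def d_def K_def T_def P_def
    by (simp add: algebra_simps power2_eq_square) (simp add: field_simps)
  have "a * d > 0"
    using assms(1) a_pos by (simp add: d_def)
  then have "\<forall>\<^sub>F N in sequentially. a * d * real N ^ 2 + b1 * real N + (P - K) > 0 \<and>
      a * d * real N ^ 2 + b0 * real N + (P - K) > 0"
    by (intro eventually_conj eventually_quadratic_pos)
  then show ?thesis
    by eventually_elim (metis outer inner diff_gt_0_iff_gt)
qed

end

section \<open>Blocks of zeros\<close>

locale zero_blocks =
  fixes D :: nat and W :: "int \<Rightarrow> real set" and \<mu> :: "int \<Rightarrow> real \<Rightarrow> nat"
  assumes D_pos: "D \<ge> 1"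
    and finite_W: "\<And>j. finite (W j)"
    and W_block: "\<And>j. W j \<subseteq> {of_int j * real D .. of_int j * real D + real D - 1}"
    and \<mu>_outside: "\<And>j x. x \<notin> W j \<Longrightarrow> \<mu> j x = 0"
    and sum_\<mu>: "\<And>j. sum (\<mu> j) (W j) = D + 1"
begin

definition blocks_union :: "nat \<Rightarrow> real set" where
  "blocks_union N = (\<Union>j\<in>{- int N..<int N}. W j)"

definition blocks_mult :: "nat \<Rightarrow> real \<Rightarrow> nat" where
  "blocks_mult N x = (\<Sum>j\<in>{- int N..<int N}. \<mu> j x)"

lemma W_disjoint:
  assumes "x \<in> W i" "x \<in> W j"
  shows "i = j"
proof -
  have "i \<le> j" if "x \<in> W i" "x \<in> W j" for i j
  proof -
    have "of_int i * real D \<le> x" "x \<le> of_int j * real D + real D - 1"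
      using W_block[of i] W_block[of j] that by auto
    then have "of_int i * real D < (of_int j + 1) * real D"
      by (simp add: algebra_simps)
    then have "of_int i < (of_int j + 1 :: real)"
      using D_pos by (simp add: mult_less_cancel_right)
    then show "i \<le> j"
      by linarith
  qed
  with assms show ?thesis
    by (meson order_antisym)
qed

lemma finite_blocks_union: "finite (blocks_union N)"
  by (simp add: blocks_union_def finite_W)

lemma blocks_union_range:
  assumes "x \<in> blocks_union N"
  shows "- real (N * D) \<le> x \<and> x \<le> real (N * D) - 1"
proof -
  from assms obtain j where j: "- int N \<le> j" "j \<le> int N - 1" "x \<in> W j"
    by (auto simp: blocks_union_def)
  have "of_int (- int N) * real D \<le> of_int j * real D" "of_int j * real D \<le> of_int (int N - 1) * real D"
    using j by (intro mult_right_mono; simp)+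
  with W_block[of j] j(3) show ?thesis
    by (auto simp: algebra_simps)
qed

lemma blocks_mult_le:
  assumes "\<And>j x. \<mu> j x \<le> M x"
  shows "blocks_mult N x \<le> M x"
proof (cases "\<exists>j\<in>{- int N..<int N}. x \<in> W j")
  case True
  then obtain j where j: "j \<in> {- int N..<int N}" "x \<in> W j"
    by blast
  have "blocks_mult N x = \<mu> j x + (\<Sum>i\<in>{- int N..<int N} - {j}. \<mu> i x)"
    unfolding blocks_mult_def using j(1) by (simp add: sum.remove)
  also have "(\<Sum>i\<in>{- int N..<int N} - {j}. \<mu> i x) = 0"
    using W_disjoint[OF _ j(2)] \<mu>_outside by (intro sum.neutral) blast
  finally show ?thesis
    using assms[of j x] by simp
next
  case False
  then have "blocks_mult N x = 0"
    unfolding blocks_mult_def using \<mu>_outside by (intro sum.neutral) blast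
  then show ?thesis
    by simp
qed

lemma sum_blocks:
  "(\<Sum>x\<in>blocks_union N. real (blocks_mult N x) * g x) = (\<Sum>j\<in>{- int N..<int N}. \<Sum>x\<in>W j. real (\<mu> j x) * g x)"
proof -
  have "(\<Sum>x\<in>blocks_union N. real (blocks_mult N x) * g x)
      = (\<Sum>j\<in>{- int N..<int N}. \<Sum>x\<in>blocks_union N. real (\<mu> j x) * g x)"
    unfolding blocks_mult_def by (simp add: sum_distrib_right sum.swap[of _ "blocks_union N"])
  also have "\<dots> = (\<Sum>j\<in>{- int N..<int N}. \<Sum>x\<in>W j. real (\<mu> j x) * g x)"
    using finite_blocks_union \<mu>_outside
    by (intro sum.cong[OF refl] sum.mono_neutral_right) (auto simp: blocks_union_def)
  finally show ?thesis .
qed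

lemma mass_blocks: "mass (blocks_union N) (blocks_mult N) = 2 * real N * (real D + 1)"
  using sum_blocks[of N "\<lambda>_. 1"] sum_\<mu> by (simp add: mass_def flip: of_nat_sum)

lemma moment_blocks_ge: "- ((real D + 1) * real D * real N) \<le> moment (blocks_union N) (blocks_mult N)"
proof -
  have "(\<Sum>j\<in>{- int N..<int N}. (real D + 1) * (of_int j * real D))
      \<le> (\<Sum>j\<in>{- int N..<int N}. \<Sum>x\<in>W j. real (\<mu> j x) * x)"
  proof (rule sum_mono)
    fix j :: int
    have "(real D + 1) * (of_int j * real D) = (\<Sum>x\<in>W j. real (\<mu> j x) * (of_int j * real D))"
      using sum_\<mu>[of j] by (simp add: sum_distrib_right[symmetric] flip: of_nat_sum)
    also have "\<dots> \<le> (\<Sum>x\<in>W j. real (\<mu> j x) * x)"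
      using W_block[of j] by (intro sum_mono mult_left_mono) auto
    finally show "(real D + 1) * (of_int j * real D) \<le> (\<Sum>x\<in>W j. real (\<mu> j x) * x)" .
  qed
  moreover have "(\<Sum>j\<in>{- int N..<int N}. (real D + 1) * (of_int j * real D)) = - ((real D + 1) * real D * real N)"
    by (simp add: sum_symmetric_int_range mult_ac flip: sum_distrib_left sum_distrib_right)
  ultimately show ?thesis
    by (simp add: moment_def sum_blocks)
qed

lemma pos_moment_blocks_le:
  "pos_moment (blocks_union N) (blocks_mult N) \<le> (real D + 1) * (real D * (real N * (real N - 1) / 2) + 2 * real N * real D)"
proof -
  have "(\<Sum>j\<in>{- int N..<int N}. \<Sum>x\<in>W j. real (\<mu> j x) * max 0 x)
      \<le> (\<Sum>j\<in>{- int N..<int N}. (real D + 1) * (real D * max 0 (of_int j) + real D))"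
  proof (rule sum_mono)
    fix j :: int
    have "max 0 x \<le> real D * max 0 (of_int j) + real D" if "x \<in> W j" for x
    proof -
      have "x \<le> of_int j * real D + real D - 1"
        using that W_block[of j] by auto
      moreover have "of_int j * real D \<le> real D * max 0 (of_int j)"
        using mult_right_mono[of "of_int j" "max 0 (of_int j)" "real D"] by (simp add: mult.commute)
      ultimately have "x \<le> real D * max 0 (of_int j) + real D"
        by linarith
      then show ?thesis
        by simp
    qed
    then have "(\<Sum>x\<in>W j. real (\<mu> j x) * max 0 x) \<le> (\<Sum>x\<in>W j. real (\<mu> j x) * (real D * max 0 (of_int j) + real D))"
      by (intro sum_mono mult_left_mono) auto
    also have "\<dots> = (real D + 1) * (real D * max 0 (of_int j) + real D)"
      using sum_\<mu>[of j] by (simp add: sum_distrib_right[symmetric] flip: of_nat_sum)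
    finally show "(\<Sum>x\<in>W j. real (\<mu> j x) * max 0 x) \<le> (real D + 1) * (real D * max 0 (of_int j) + real D)" .
  qed
  also have "\<dots> = (real D + 1) * (real D * (real N * (real N - 1) / 2) + 2 * real N * real D)"
    by (simp add: sum.distrib sum_symmetric_int_range_pos_part flip: sum_distrib_left)
  finally show ?thesis
    by (simp add: pos_moment_def sum_blocks)
qed

end

lemma lower_density_gtD:
  assumes "ereal y < lower_density A m"
  obtains R where "\<And>r x. R \<le> r \<Longrightarrow> 0 < r \<Longrightarrow> y * (2 * r) < (\<Sum>z\<in>A \<inter> {x - r..x + r}. real (m z))"
proof -
  have "\<forall>\<^sub>F r in at_top. ereal y < (INF x. ereal ((\<Sum>z\<in>A \<inter> {x - r..x + r}. real (m z)) / (2 * r)))"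
    using less_LiminfD[OF assms[unfolded lower_density_def]] .
  then obtain R where R: "\<And>r. R \<le> r \<Longrightarrow> ereal y < (INF x. ereal ((\<Sum>z\<in>A \<inter> {x - r..x + r}. real (m z)) / (2 * r)))"
    unfolding eventually_at_top_linorder by blast
  show ?thesis
  proof (rule that)
    fix r x :: real
    assume "R \<le> r" "0 < r"
    have "y < (\<Sum>z\<in>A \<inter> {x - r..x + r}. real (m z)) / (2 * r)"
      using less_INF_D[OF R[OF \<open>R \<le> r\<close>], of x] by simp
    then show "y * (2 * r) < (\<Sum>z\<in>A \<inter> {x - r..x + r}. real (m z))"
      using \<open>0 < r\<close> by (simp add: pos_less_divide_eq)
  qed
qed

lemma obtain_block_length:
  fixes y R :: real
  assumes "1 < y"
  obtains D :: nat where "2 \<le> D" "R \<le> (real D - 1) / 2" "real D + 1 \<le> y * (real D - 1)"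
proof
  define D where "D = nat \<lceil>max (2 * R + 1) (2 / (y - 1) + 1)\<rceil> + 2"
  have D: "max (2 * R + 1) (2 / (y - 1) + 1) + 2 \<le> real D"
    unfolding D_def by linarith
  then show "2 \<le> D" "R \<le> (real D - 1) / 2"
    by (auto simp: D_def)
  have "(y - 1) * (2 / (y - 1)) \<le> (y - 1) * (real D - 1)"
    using D assms by (intro mult_left_mono) auto
  moreover have "(y - 1) * (2 / (y - 1)) = 2"
    using assms by (simp add: field_simps)
  ultimately show "real D + 1 \<le> y * (real D - 1)"
    by (simp add: algebra_simps)
qed

lemma lower_density_gt_one_blocks:
  fixes A :: "real set" and m :: "real \<Rightarrow> nat"
  assumes "lower_density A m > 1"
  obtains D :: nat where "D \<ge> 1"
    "\<And>j::int. finite (A \<inter> {of_int j * real D .. of_int j * real D + real D - 1}) \<and>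
       D + 1 \<le> sum m (A \<inter> {of_int j * real D .. of_int j * real D + real D - 1})"
proof -
  obtain y where "ereal 1 < ereal y" "ereal y < lower_density A m"
    using assms ereal_dense2 by (metis one_ereal_def)
  then have "1 < y"
    by simp
  obtain R where R: "\<And>r x. R \<le> r \<Longrightarrow> 0 < r \<Longrightarrow> y * (2 * r) < (\<Sum>z\<in>A \<inter> {x - r..x + r}. real (m z))"
    using lower_density_gtD[OF \<open>ereal y < lower_density A m\<close>] by blast
  obtain D where D: "2 \<le> D" "R \<le> (real D - 1) / 2" "real D + 1 \<le> y * (real D - 1)"
    using obtain_block_length[OF \<open>1 < y\<close>] by blast
  show ?thesis
  proof (rule that)
    show "1 \<le> D"
      using D(1) by simp
    fix j :: int
    define I where "I = {of_int j * real D .. of_int j * real D + real D - 1}"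
    define x where "x = of_int j * real D + (real D - 1) / 2"
    have "{x - (real D - 1) / 2 .. x + (real D - 1) / 2} = I"
      by (simp add: x_def I_def)
    then have "y * (real D - 1) < (\<Sum>z\<in>A \<inter> I. real (m z))"
      using R[OF D(2), of x] D(1) by (simp add: algebra_simps)
    with D(3) have "real (D + 1) < real (sum m (A \<inter> I))"
      by (simp add: of_nat_sum)
    then have "D + 1 < sum m (A \<inter> I)"
      by (simp only: of_nat_less_iff)
    moreover from this have "finite (A \<inter> I)"
      by (metis not_less0 sum.infinite)
    ultimately show "finite (A \<inter> {of_int j * real D .. of_int j * real D + real D - 1}) \<and>
       D + 1 \<le> sum m (A \<inter> {of_int j * real D .. of_int j * real D + real D - 1})"
      by (simp add: I_def)
  qed
qed

lemma obtain_dense_blocks: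
  assumes "lower_density A m > 1"
  obtains D W \<mu> where "zero_blocks D W \<mu>" "\<And>j. W j \<subseteq> A" "\<And>j x. \<mu> j x \<le> m x"
proof -
  obtain D where D: "D \<ge> 1"
    and blocks: "\<And>j::int. finite (A \<inter> {of_int j * real D .. of_int j * real D + real D - 1}) \<and>
       D + 1 \<le> sum m (A \<inter> {of_int j * real D .. of_int j * real D + real D - 1})"
    by (rule lower_density_gt_one_blocks[OF assms]) blast
  define W where "W j = A \<inter> {of_int j * real D .. of_int j * real D + real D - 1}" for j :: int
  have "\<exists>\<mu>. (\<forall>x. \<mu> x \<le> m x) \<and> (\<forall>x. x \<notin> W j \<longrightarrow> \<mu> x = 0) \<and> sum \<mu> (W j) = D + 1" for j
  proof -
    have "finite (W j)" "D + 1 \<le> sum m (W j)"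
      using blocks[of j] by (simp_all add: W_def)
    then show ?thesis
      by (rule obtain_sub_multiplicity) blast
  qed
  then obtain \<mu> where \<mu>: "\<And>j x. \<mu> j x \<le> m x" "\<And>j x. x \<notin> W j \<Longrightarrow> \<mu> j x = 0"
    "\<And>j. sum (\<mu> j) (W j) = D + 1"
    by metis
  have "zero_blocks D W \<mu>"
  proof
    show "finite (W j)" "W j \<subseteq> {of_int j * real D .. of_int j * real D + real D - 1}" for j
      using blocks[of j] by (auto simp: W_def)
  qed (use D \<mu> in auto)
  moreover have "W j \<subseteq> A" for j
    by (auto simp: W_def)
  ultimately show ?thesis
    using that \<mu>(1) by blast
qed

section \<open>Dense zeros contradict the maximum modulus principle\<close>

locale sech_zero_blocks = sech_series + zero_blocks +
  assumes W_zeros: "\<And>j. W j \<subseteq> {x. f x = 0}"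
    and \<mu>_le_zero_mult: "\<And>j x. \<mu> j x \<le> zero_mult f x"
begin

lemma centre_exponent_blocks_le:
  assumes "f \<xi> \<noteq> 0" "\<bar>\<xi>\<bar> + 1 \<le> real (N * D)"
  defines "M0 \<equiv> 2 * real N * (real D + 1)"
    and "M1 \<equiv> - ((real D + 1) * real D * real N)"
    and "Mp \<equiv> (real D + 1) * (real D * (real N * (real N - 1) / 2) + 2 * real N * real D)"
  shows "centre_exponent (N * D) N \<xi> M0 Mp \<le> outer_exponent (N * D) N M0 \<or>
    centre_exponent (N * D) N \<xi> M0 Mp \<le> inner_exponent (N * D) N M0 M1"
proof -
  let ?Z = "blocks_union N" and ?m = "blocks_mult N"
  have Z_range: "\<And>x. x \<in> ?Z \<Longrightarrow> - real (N * D) \<le> x \<and> x \<le> real (N * D) - 1"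
    by (rule blocks_union_range)
  have m_le: "\<And>x. ?m x \<le> zero_mult f x"
    by (rule blocks_mult_le) (rule \<mu>_le_zero_mult)
  have "\<xi> \<notin> ?Z"
    using assms(1) W_zeros by (force simp: blocks_union_def)
  obtain h where h_holomorphic: "h holomorphic_on annulus (N * D)"
    and h_eq: "\<And>w. w \<in> annulus (N * D) \<Longrightarrow> w \<notin> (\<lambda>x. complex_of_real (exp (2 * a * x))) ` ?Z \<Longrightarrow>
       cleared (N * D) w = h w * zero_poly ?Z ?m w"
    by (rule obtain_zero_quotient[OF _ finite_blocks_union Z_range m_le]) (use assms(1) in blast)+
  have "centre_exponent (N * D) N \<xi> (mass ?Z ?m) (pos_moment ?Z ?m)
      \<le> max (outer_exponent (N * D) N (mass ?Z ?m)) (inner_exponent (N * D) N (mass ?Z ?m) (moment ?Z ?m))"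
    by (rule centre_exponent_le_boundary[OF finite_blocks_union Z_range h_holomorphic h_eq assms(1) \<open>\<xi> \<notin> ?Z\<close> assms(2)])
  moreover have "2 * a * M1 \<le> 2 * a * moment ?Z ?m"
    unfolding M1_def using moment_blocks_ge a_pos by (intro mult_left_mono) auto
  then have "inner_exponent (N * D) N (mass ?Z ?m) (moment ?Z ?m) \<le> inner_exponent (N * D) N M0 M1"
    unfolding inner_exponent_def mass_blocks M0_def by linarith
  moreover have "2 * a * pos_moment ?Z ?m \<le> 2 * a * Mp"
    unfolding Mp_def using pos_moment_blocks_le a_pos by (intro mult_left_mono) auto
  then have "centre_exponent (N * D) N \<xi> M0 Mp \<le> centre_exponent (N * D) N \<xi> (mass ?Z ?m) (pos_moment ?Z ?m)"
    unfolding centre_exponent_def mass_blocks M0_def by linarith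
  moreover have "outer_exponent (N * D) N (mass ?Z ?m) = outer_exponent (N * D) N M0"
    by (simp add: mass_blocks M0_def)
  ultimately show ?thesis
    by (auto simp: le_max_iff_disj)
qed

lemma no_dense_zero_blocks:
  assumes "f \<xi> \<noteq> 0"
  shows False
proof -
  have "real N \<le> real (N * D)" for N
    using D_pos by (simp add: mult_le_cancel_left1)
  moreover have "\<forall>\<^sub>F N in sequentially. \<bar>\<xi>\<bar> + 1 \<le> real N"
    using filterlim_real_sequentially by (simp add: filterlim_at_top)
  ultimately have "\<forall>\<^sub>F N in sequentially. \<bar>\<xi>\<bar> + 1 \<le> real (N * D)"
    by (auto elim!: eventually_mono intro: order.trans)
  from eventually_happens'[OF sequentially_bot eventually_conj[OF this eventually_exponent_gap[OF D_pos, of \<xi>]]]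
  obtain N where "\<bar>\<xi>\<bar> + 1 \<le> real (N * D)"
    and "outer_exponent (N * D) N (2 * real N * (real D + 1))
      < centre_exponent (N * D) N \<xi> (2 * real N * (real D + 1))
          ((real D + 1) * (real D * (real N * (real N - 1) / 2) + 2 * real N * real D))"
    and "inner_exponent (N * D) N (2 * real N * (real D + 1)) (- ((real D + 1) * real D * real N))
      < centre_exponent (N * D) N \<xi> (2 * real N * (real D + 1))
          ((real D + 1) * (real D * (real N * (real N - 1) / 2) + 2 * real N * real D))"
    by blast
  with centre_exponent_blocks_le[OF assms] show False
    by fastforce
qed

end

theorem theorem4p6:
  fixes a :: real and c :: "int \<Rightarrow> complex" and f :: "real \<Rightarrow> complex"
  assumes "a > 0"
    and "bounded (range c)"
    and "\<And>x. f x = (\<Sum>\<^sub>\<infinity>k\<in>(UNIV::int set). c k * complex_of_real (sech_kernel a (x - of_int k)))"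
    and "\<exists>x. f x \<noteq> 0"
  shows "lower_density {x. f x = 0} (zero_mult f) \<le> 1"
proof (rule ccontr)
  assume "\<not> lower_density {x. f x = 0} (zero_mult f) \<le> 1"
  then have "lower_density {x. f x = 0} (zero_mult f) > 1"
    by simp
  then obtain D W \<mu> where blocks: "zero_blocks D W \<mu>" "\<And>j. W j \<subseteq> {x. f x = 0}"
    "\<And>j x. \<mu> j x \<le> zero_mult f x"
    using obtain_dense_blocks by blast
  obtain B where "\<And>k. norm (c k) \<le> B"
    using assms(2) by (auto simp: bounded_iff)
  with assms(1,3) blocks interpret sech_zero_blocks a c B f D W \<mu>
    by (intro sech_zero_blocks.intro sech_series.intro sech_zero_blocks_axioms.intro)
  from assms(4) obtain \<xi> where "f \<xi> \<noteq> 0"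
    by blast
  then show False
    by (rule no_dense_zero_blocks)
qed

end
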